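(* Let $(\mathbf{H},m,\Delta)$ be a poset Hopf monoid and let $H=\mathcal{F}(\mathbf{k}\mathbf{H})$ be the Hopf algebra obtained by the Fock functor. Then the space of primitives of $H_n$ is the image of the space of primitives of $\mathbf{k}\mathbf{H}[\{1,\dots,n\}]$ under the quotient map $p\mapsto[p]$. Further, if $(\mathbf{H},\Box)$ is a poset monoid forming an adjoint pair $\Delta\dashv\Box$ with $(\mathbf{H},\Delta)$, then the space of primitives of $H$ has a basis given by $\{[\omega_x]: x\ \text{indecomposable with respect to }\Box\}$, where $\omega_x=\sum_{x\le y}\mu(x,y)\,y$ with the sum and Möbius function taken in the poset $\mathbf{H}[\{1,\dots,n\}]$.
   Context: $\mathbf{k}$ is a field of characteristic $0$. A (connected) poset species $\mathbf{H}$ assigns to each finite set $I$ a locally finite poset $\mathbf{H}[I]$, $\mathbf{H}[\emptyset]=\{1\}$, and to each bijection an order-preserving bijection (relabelling), functorially. A poset Hopf monoid $(\mathbf{H},m,\Delta)$ consists of order-preserving maps $m_{S,T}:\mathbf{H}[S]\times\mathbf{H}[T]\to\mathbf{H}[S\sqcup T]$ (natural, associative, unital) and $\Delta_{S,T}:\mathbf{H}[S\sqcup T]\to\mathbf{H}[S]\times\mathbf{H}[T]$ (natural, coassociative, counital), satisfying compatibility: for $I=S_1\sqcup S_2=T_1\sqcup T_2$, $A=S_1\cap T_1$, $B=S_1\cap T_2$, $C=S_2\cap T_1$, $D=S_2\cap T_2$, if $\Delta_{A,B}(x)=(x_A,x_B)$ and $\Delta_{C,D}(y)=(y_C,y_D)$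 then $\Delta_{T_1,T_2}(m_{S_1,S_2}(x,y))=(m_{A,C}(x_A,y_C),m_{B,D}(x_B,y_D))$. A poset monoid $(\mathbf{H},\Box)$ is defined like $m$ (order-preserving, natural, associative, unital). Adjoint pair $\Delta\dashv\Box$: $\Delta_{S,T}(x)\le(y,z)\iff x\le\Box_{S,T}(y,z)$. $x\in\mathbf{H}[I]$ is $\Box$-indecomposable if it is not $\Box_{S,T}(y,z)$ with $S,T$ nonempty. $\mathbf{k}\mathbf{H}[I]$ has basis $\mathbf{H}[I]$ with linearly extended operations. The Fock functor gives $H=\bigoplus_{n\ge0}H_n$, $H_n=\mathbf{k}\mathbf{H}[\{1,\dots,n\}]_{S_n}$ (coinvariants under the relabelling action of the symmetric group $S_n$), with $[x]$ the class of $x$; multiplication $[x][y]=[m(x,y)]$ and comultiplication $\Delta([x])=\sum_{S\sqcup T=\{1,\dots,n\}}[\Delta_{S,T}(x)]$, where components on $S,T$ are identified with components on $\{1,\dots,|S|\},\{1,\dots,|T|\}$ via order-preserving relabelling. An element of $\mathbf{k}\mathbf{H}[I]$ is primitive if $\Delta_{S,T}$ kills it for all $S,T$ nonempty; an element $h\in H$ is primitive if $\Delta(h)=h\otimes1+1\otimes h$.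
   Formalization: The basis claim for the classes $[\omega_x]$ also assumes that, for every n, each x in $\mathbf{H}[\{1,\dots,n\}]$ has only finitely many elements y there with $x\le y$. The statement above fails without it. *)

theory Defs
  imports Main "HOL-Library.Function_Algebras"
begin

definition supp :: "('x \<Rightarrow> 'k::zero) \<Rightarrow> 'x set" where
  "supp v = {x. v x \<noteq> 0}"

text \<open>An element of the linearization k[A]: finitely supported function with support in A.\<close>
definition lin :: "'x set \<Rightarrow> ('x \<Rightarrow> 'k::zero) \<Rightarrow> bool" where
  "lin A v \<longleftrightarrow> finite (supp v) \<and> supp v \<subseteq> A"

definition push :: "('x \<Rightarrow> 'y) \<Rightarrow> ('x \<Rightarrow> 'k::comm_monoid_add) \<Rightarrow> 'y \<Rightarrow> 'k" where
  "push f v = (\<lambda>y. \<Sum>x\<in>{x\<in>supp v. f x = y}. v x)"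

definition delta :: "'x \<Rightarrow> 'x \<Rightarrow> 'k::zero_neq_one" where
  "delta x = (\<lambda>z. if z = x then 1 else 0)"

inductive_set lspan :: "('x \<Rightarrow> 'k::field) set \<Rightarrow> ('x \<Rightarrow> 'k) set" for G where
  zero: "0 \<in> lspan G"
| add: "v \<in> lspan G \<Longrightarrow> w \<in> lspan G \<Longrightarrow> v + w \<in> lspan G"
| smult: "v \<in> lspan G \<Longrightarrow> (\<lambda>z. c * v z) \<in> lspan G"
| gen: "g \<in> G \<Longrightarrow> g \<in> lspan G"

text \<open>Labels are finite subsets of nat. H I is the poset H[I] (carrier), le I its order,
  rl \<sigma> I x the relabelling of x \<in> H[I] along the bijection \<sigma> : I \<rightarrow> \<sigma> ` I.\<close>

definition unitH :: "(nat set \<Rightarrow> 'a set) \<Rightarrow> 'a" where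
  "unitH H = the_elem (H {})"

definition poset_species ::
  "(nat set \<Rightarrow> 'a set) \<Rightarrow> (nat set \<Rightarrow> 'a \<Rightarrow> 'a \<Rightarrow> bool) \<Rightarrow> ((nat \<Rightarrow> nat) \<Rightarrow> nat set \<Rightarrow> 'a \<Rightarrow> 'a) \<Rightarrow> bool" where
  "poset_species H le rl \<longleftrightarrow>
    (\<exists>u. H {} = {u}) \<and>
    (\<forall>I. finite I \<longrightarrow>
        (\<forall>x\<in>H I. le I x x) \<and>
        (\<forall>x\<in>H I. \<forall>y\<in>H I. le I x y \<and> le I y x \<longrightarrow> x = y) \<and>
        (\<forall>x\<in>H I. \<forall>y\<in>H I. \<forall>z\<in>H I. le I x y \<and> le I y z \<longrightarrow> le I x z) \<and>
        (\<forall>x\<in>H I. \<forall>y\<in>H I. finite {z\<in>H I. le I x z \<and> le I z y})) \<and>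
    (\<forall>I \<sigma> x. finite I \<and> inj_on \<sigma> I \<and> x \<in> H I \<longrightarrow> rl \<sigma> I x \<in> H (\<sigma> ` I)) \<and>
    (\<forall>I \<sigma> \<tau> x. finite I \<and> x \<in> H I \<and> (\<forall>i\<in>I. \<sigma> i = \<tau> i) \<longrightarrow> rl \<sigma> I x = rl \<tau> I x) \<and>
    (\<forall>I x. finite I \<and> x \<in> H I \<longrightarrow> rl id I x = x) \<and>
    (\<forall>I \<sigma> \<tau> x. finite I \<and> inj_on \<sigma> I \<and> inj_on \<tau> (\<sigma> ` I) \<and> x \<in> H I \<longrightarrow>
        rl \<tau> (\<sigma> ` I) (rl \<sigma> I x) = rl (\<tau> \<circ> \<sigma>) I x) \<and>
    (\<forall>I \<sigma> x y. finite I \<and> inj_on \<sigma> I \<and> x \<in> H I \<and> y \<in> H I \<and> le I x y \<longrightarrow>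
        le (\<sigma> ` I) (rl \<sigma> I x) (rl \<sigma> I y))"

definition poset_monoid ::
  "(nat set \<Rightarrow> 'a set) \<Rightarrow> (nat set \<Rightarrow> 'a \<Rightarrow> 'a \<Rightarrow> bool) \<Rightarrow> ((nat \<Rightarrow> nat) \<Rightarrow> nat set \<Rightarrow> 'a \<Rightarrow> 'a)
   \<Rightarrow> (nat set \<Rightarrow> nat set \<Rightarrow> 'a \<Rightarrow> 'a \<Rightarrow> 'a) \<Rightarrow> bool" where
  "poset_monoid H le rl m \<longleftrightarrow>
    (\<forall>S T x y. finite S \<and> finite T \<and> S \<inter> T = {} \<and> x \<in> H S \<and> y \<in> H T \<longrightarrow> m S T x y \<in> H (S \<union> T)) \<and>
    (\<forall>S T x x' y y'. finite S \<and> finite T \<and> S \<inter> T = {} \<and> x \<in> H S \<and> x' \<in> H S \<and> y \<in> H T \<and> y' \<in> H T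
        \<and> le S x x' \<and> le T y y' \<longrightarrow> le (S \<union> T) (m S T x y) (m S T x' y')) \<and>
    (\<forall>S T x y \<sigma>. finite S \<and> finite T \<and> S \<inter> T = {} \<and> x \<in> H S \<and> y \<in> H T \<and> inj_on \<sigma> (S \<union> T) \<longrightarrow>
        rl \<sigma> (S \<union> T) (m S T x y) = m (\<sigma> ` S) (\<sigma> ` T) (rl \<sigma> S x) (rl \<sigma> T y)) \<and>
    (\<forall>R S T x y z. finite R \<and> finite S \<and> finite T \<and> R \<inter> S = {} \<and> R \<inter> T = {} \<and> S \<inter> T = {}
        \<and> x \<in> H R \<and> y \<in> H S \<and> z \<in> H T \<longrightarrow>
        m (R \<union> S) T (m R S x y) z = m R (S \<union> T) x (m S T y z)) \<and>
    (\<forall>I x. finite I \<and> x \<in> H I \<longrightarrow> m {} I (unitH H) x = x \<and> m I {} x (unitH H) = x)"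

definition poset_comonoid ::
  "(nat set \<Rightarrow> 'a set) \<Rightarrow> (nat set \<Rightarrow> 'a \<Rightarrow> 'a \<Rightarrow> bool) \<Rightarrow> ((nat \<Rightarrow> nat) \<Rightarrow> nat set \<Rightarrow> 'a \<Rightarrow> 'a)
   \<Rightarrow> (nat set \<Rightarrow> nat set \<Rightarrow> 'a \<Rightarrow> 'a \<times> 'a) \<Rightarrow> bool" where
  "poset_comonoid H le rl D \<longleftrightarrow>
    (\<forall>S T x. finite S \<and> finite T \<and> S \<inter> T = {} \<and> x \<in> H (S \<union> T) \<longrightarrow>
        fst (D S T x) \<in> H S \<and> snd (D S T x) \<in> H T) \<and>
    (\<forall>S T x x'. finite S \<and> finite T \<and> S \<inter> T = {} \<and> x \<in> H (S \<union> T) \<and> x' \<in> H (S \<union> T)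
        \<and> le (S \<union> T) x x' \<longrightarrow>
        le S (fst (D S T x)) (fst (D S T x')) \<and> le T (snd (D S T x)) (snd (D S T x'))) \<and>
    (\<forall>S T x \<sigma>. finite S \<and> finite T \<and> S \<inter> T = {} \<and> x \<in> H (S \<union> T) \<and> inj_on \<sigma> (S \<union> T) \<longrightarrow>
        D (\<sigma> ` S) (\<sigma> ` T) (rl \<sigma> (S \<union> T) x) = (rl \<sigma> S (fst (D S T x)), rl \<sigma> T (snd (D S T x)))) \<and>
    (\<forall>R S T x. finite R \<and> finite S \<and> finite T \<and> R \<inter> S = {} \<and> R \<inter> T = {} \<and> S \<inter> T = {}
        \<and> x \<in> H (R \<union> S \<union> T) \<longrightarrow>
        fst (D R (S \<union> T) x) = fst (D R S (fst (D (R \<union> S) T x))) \<and>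
        D S T (snd (D R (S \<union> T) x)) = (snd (D R S (fst (D (R \<union> S) T x))), snd (D (R \<union> S) T x))) \<and>
    (\<forall>I x. finite I \<and> x \<in> H I \<longrightarrow> D {} I x = (unitH H, x) \<and> D I {} x = (x, unitH H))"

definition hopf_compatible ::
  "(nat set \<Rightarrow> 'a set) \<Rightarrow> (nat set \<Rightarrow> nat set \<Rightarrow> 'a \<Rightarrow> 'a \<Rightarrow> 'a)
   \<Rightarrow> (nat set \<Rightarrow> nat set \<Rightarrow> 'a \<Rightarrow> 'a \<times> 'a) \<Rightarrow> bool" where
  "hopf_compatible H m D \<longleftrightarrow>
    (\<forall>S1 S2 T1 T2 x y. finite S1 \<and> finite S2 \<and> S1 \<inter> S2 = {} \<and> T1 \<inter> T2 = {} \<and> S1 \<union> S2 = T1 \<union> T2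
       \<and> x \<in> H S1 \<and> y \<in> H S2 \<longrightarrow>
       D T1 T2 (m S1 S2 x y) =
         (m (S1 \<inter> T1) (S2 \<inter> T1) (fst (D (S1 \<inter> T1) (S1 \<inter> T2) x)) (fst (D (S2 \<inter> T1) (S2 \<inter> T2) y)),
          m (S1 \<inter> T2) (S2 \<inter> T2) (snd (D (S1 \<inter> T1) (S1 \<inter> T2) x)) (snd (D (S2 \<inter> T1) (S2 \<inter> T2) y))))"

definition poset_hopf_monoid ::
  "(nat set \<Rightarrow> 'a set) \<Rightarrow> (nat set \<Rightarrow> 'a \<Rightarrow> 'a \<Rightarrow> bool) \<Rightarrow> ((nat \<Rightarrow> nat) \<Rightarrow> nat set \<Rightarrow> 'a \<Rightarrow> 'a)
   \<Rightarrow> (nat set \<Rightarrow> nat set \<Rightarrow> 'a \<Rightarrow> 'a \<Rightarrow> 'a) \<Rightarrow> (nat set \<Rightarrow> nat set \<Rightarrow> 'a \<Rightarrow> 'a \<times> 'a) \<Rightarrow> bool" where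
  "poset_hopf_monoid H le rl m D \<longleftrightarrow>
    poset_species H le rl \<and> poset_monoid H le rl m \<and> poset_comonoid H le rl D \<and> hopf_compatible H m D"

definition adjoint_pair ::
  "(nat set \<Rightarrow> 'a set) \<Rightarrow> (nat set \<Rightarrow> 'a \<Rightarrow> 'a \<Rightarrow> bool)
   \<Rightarrow> (nat set \<Rightarrow> nat set \<Rightarrow> 'a \<Rightarrow> 'a \<times> 'a) \<Rightarrow> (nat set \<Rightarrow> nat set \<Rightarrow> 'a \<Rightarrow> 'a \<Rightarrow> 'a) \<Rightarrow> bool" where
  "adjoint_pair H le D B \<longleftrightarrow>
    (\<forall>S T x y z. finite S \<and> finite T \<and> S \<inter> T = {} \<and> x \<in> H (S \<union> T) \<and> y \<in> H S \<and> z \<in> H T \<longrightarrow>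
       ((le S (fst (D S T x)) y \<and> le T (snd (D S T x)) z) \<longleftrightarrow> le (S \<union> T) x (B S T y z)))"

definition indecomposable ::
  "(nat set \<Rightarrow> 'a set) \<Rightarrow> (nat set \<Rightarrow> nat set \<Rightarrow> 'a \<Rightarrow> 'a \<Rightarrow> 'a) \<Rightarrow> nat set \<Rightarrow> 'a \<Rightarrow> bool" where
  "indecomposable H B I x \<longleftrightarrow> x \<in> H I \<and>
     \<not> (\<exists>S T y z. S \<noteq> {} \<and> T \<noteq> {} \<and> S \<inter> T = {} \<and> S \<union> T = I \<and> y \<in> H S \<and> z \<in> H T \<and> x = B S T y z)"

definition mobius :: "'a set \<Rightarrow> ('a \<Rightarrow> 'a \<Rightarrow> bool) \<Rightarrow> 'a \<Rightarrow> 'a \<Rightarrow> 'k::comm_ring_1" where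
  "mobius A le = (THE \<mu>. \<forall>x y. \<mu> x y =
     (if x \<in> A \<and> y \<in> A \<and> le x y then
        (if x = y then 1 else - (\<Sum>z\<in>{z\<in>A. le x z \<and> le z y \<and> z \<noteq> y}. \<mu> x z))
      else 0))"

definition nset :: "nat \<Rightarrow> nat set" where
  "nset n = {1..n}"

definition omega :: "(nat set \<Rightarrow> 'a set) \<Rightarrow> (nat set \<Rightarrow> 'a \<Rightarrow> 'a \<Rightarrow> bool) \<Rightarrow> nat \<Rightarrow> 'a \<Rightarrow> 'a \<Rightarrow> 'k::comm_ring_1" where
  "omega H le n x = (\<lambda>y. if y \<in> H (nset n) \<and> le (nset n) x y
                          then mobius (H (nset n)) (le (nset n)) x y else 0)"

definition lin_primitive ::
  "(nat set \<Rightarrow> nat set \<Rightarrow> 'a \<Rightarrow> 'a \<times> 'a) \<Rightarrow> nat set \<Rightarrow> ('a \<Rightarrow> 'k::field) \<Rightarrow> bool" where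
  "lin_primitive D I v \<longleftrightarrow>
    (\<forall>S T. S \<union> T = I \<and> S \<inter> T = {} \<and> S \<noteq> {} \<and> T \<noteq> {} \<longrightarrow> push (D S T) v = 0)"

text \<open>Kernel of the quotient map kH[n] \<rightarrow> H_n = kH[n]_{S_n}.\<close>
definition coinv_ker :: "(nat set \<Rightarrow> 'a set) \<Rightarrow> ((nat \<Rightarrow> nat) \<Rightarrow> nat set \<Rightarrow> 'a \<Rightarrow> 'a) \<Rightarrow> nat
    \<Rightarrow> ('a \<Rightarrow> 'k::field) set" where
  "coinv_ker H rl n = lspan {delta x - delta (rl \<sigma> (nset n) x) | x \<sigma>.
       x \<in> H (nset n) \<and> bij_betw \<sigma> (nset n) (nset n)}"

text \<open>H_a \<otimes> H_b = (kH[a]/K_a) \<otimes> (kH[b]/K_b) = k[H[a] \<times> H[b]] / (K_a \<otimes> kH[b] + kH[a] \<otimes> K_b);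
  this is the kernel of k[H[a] \<times> H[b]] \<rightarrow> H_a \<otimes> H_b.\<close>
definition tensor_ker :: "(nat set \<Rightarrow> 'a set) \<Rightarrow> ((nat \<Rightarrow> nat) \<Rightarrow> nat set \<Rightarrow> 'a \<Rightarrow> 'a) \<Rightarrow> nat \<Rightarrow> nat
    \<Rightarrow> ('a \<times> 'a \<Rightarrow> 'k::field) set" where
  "tensor_ker H rl a b = lspan
     ({delta (y, z) - delta (rl \<sigma> (nset a) y, z) | y z \<sigma>.
         y \<in> H (nset a) \<and> z \<in> H (nset b) \<and> bij_betw \<sigma> (nset a) (nset a)} \<union>
      {delta (y, z) - delta (y, rl \<tau> (nset b) z) | y z \<tau>.
         y \<in> H (nset a) \<and> z \<in> H (nset b) \<and> bij_betw \<tau> (nset b) (nset b)})"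

definition std :: "nat set \<Rightarrow> nat \<Rightarrow> nat" where
  "std S i = card {j\<in>S. j < i} + 1"

text \<open>Component in H_a \<otimes> H_{n-a} of \<Delta>([v]) for v \<in> kH[n] (given by a representative in
  k[H[a] \<times> H[n-a]]).\<close>
definition fock_comp :: "((nat \<Rightarrow> nat) \<Rightarrow> nat set \<Rightarrow> 'a \<Rightarrow> 'a) \<Rightarrow> (nat set \<Rightarrow> nat set \<Rightarrow> 'a \<Rightarrow> 'a \<times> 'a)
    \<Rightarrow> nat \<Rightarrow> nat \<Rightarrow> ('a \<Rightarrow> 'k::field) \<Rightarrow> 'a \<times> 'a \<Rightarrow> 'k" where
  "fock_comp rl D n a v = (\<lambda>yz. \<Sum>S\<in>{S. S \<subseteq> nset n \<and> card S = a}.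
      push (\<lambda>x. (rl (std S) S (fst (D S (nset n - S) x)),
                 rl (std (nset n - S)) (nset n - S) (snd (D S (nset n - S) x)))) v yz)"

text \<open>[v] \<in> H_n (n \<ge> 1) is primitive, i.e. \<Delta>[v] = [v] \<otimes> 1 + 1 \<otimes> [v]: all components
  in H_a \<otimes> H_{n-a} with 0 < a < n vanish (the (n,0) and (0,n) components are [v]\<otimes>1, 1\<otimes>[v]
  by counitality).\<close>
definition fock_primitive :: "(nat set \<Rightarrow> 'a set) \<Rightarrow> ((nat \<Rightarrow> nat) \<Rightarrow> nat set \<Rightarrow> 'a \<Rightarrow> 'a)
    \<Rightarrow> (nat set \<Rightarrow> nat set \<Rightarrow> 'a \<Rightarrow> 'a \<times> 'a) \<Rightarrow> nat \<Rightarrow> ('a \<Rightarrow> 'k::field) \<Rightarrow> bool" where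
  "fock_primitive H rl D n v \<longleftrightarrow>
    (\<forall>a. 0 < a \<and> a < n \<longrightarrow> fock_comp rl D n a v \<in> tensor_ker H rl a (n - a))"

end

theory Submission
  imports Defs "HOL-Combinatorics.Permutations"
begin

text \<open>
  Averaging over the symmetric group (possible in characteristic 0) replaces every element of
  \<open>kH[n]\<close> by an \<open>S\<^sub>n\<close>-invariant one with the same class in \<open>H\<^sub>n\<close>. For an invariant
  \<open>p\<close> all coproduct components on \<open>a\<close>-subsets agree after standard relabelling, so
  primitivity of \<open>[p]\<close> puts this common component into the span of the
  \<open>S\<^sub>a \<times> S\<^sub>n\<^sub>-\<^sub>a\<close> relabelling relations. Being itself invariant under
  \<open>S\<^sub>a \<times> S\<^sub>n\<^sub>-\<^sub>a\<close>, it vanishes, as pairing with the indicators of its level sets shows;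
  hence \<open>p\<close> is primitive.

  For the basis, the adjunction \<open>\<Delta> \<stileturn> \<box>\<close> turns the zeta transform of
  \<open>\<Delta>\<^sub>S\<^sub>,\<^sub>T(q)\<close> at \<open>(y, z)\<close> into the zeta transform of \<open>q\<close> at \<open>\<box>\<^sub>S\<^sub>,\<^sub>T(y, z)\<close>.
  For \<open>q = \<omega>\<^sub>x\<close> the latter is \<open>\<delta>(x, \<box>(y, z))\<close>, which vanishes when \<open>x\<close> is indecomposable;
  for a primitive \<open>q\<close> it shows that the zeta transform of \<open>q\<close> vanishes at decomposable
  elements, so Moebius inversion writes \<open>q\<close> as a combination of the \<open>\<omega>\<^sub>x\<close> with \<open>x\<close>
  indecomposable. Independence modulo the relabelling relations follows by pairing with the
  indicator of the \<open>S\<^sub>n\<close>-orbit of an \<open>x\<close> with a largest up-set.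
\<close>

section \<open>Finitely supported functions\<close>

lemma sum_fun_apply: "(\<Sum>i\<in>I. g i) x = (\<Sum>i\<in>I. g i x)"
  by (induction I rule: infinite_finite_induct) auto

lemma supp_zero [simp]: "supp 0 = {}"
  by (auto simp: supp_def)

lemma supp_delta [simp]: "supp (delta x :: _ \<Rightarrow> 'k::zero_neq_one) = {x}"
  by (auto simp: supp_def delta_def)

lemma supp_add: "supp (v + w :: _ \<Rightarrow> 'k::monoid_add) \<subseteq> supp v \<union> supp w"
  by (auto simp: supp_def)

lemma supp_uminus [simp]: "supp (- v :: _ \<Rightarrow> 'k::group_add) = supp v"
  by (auto simp: supp_def)

lemma supp_diff: "supp (v - w :: _ \<Rightarrow> 'k::group_add) \<subseteq> supp v \<union> supp w"
  by (auto simp: supp_def)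

lemma supp_smult: "supp (\<lambda>z. c * v z :: 'k::mult_zero) \<subseteq> supp v"
  by (auto simp: supp_def)

lemma supp_sum_subset: "supp (\<Sum>i\<in>I. g i :: _ \<Rightarrow> 'k::comm_monoid_add) \<subseteq> (\<Union>i\<in>I. supp (g i))"
proof
  fix x assume "x \<in> supp (\<Sum>i\<in>I. g i)"
  then have "(\<Sum>i\<in>I. g i x) \<noteq> 0" by (simp add: supp_def sum_fun_apply)
  then obtain i where "i \<in> I" "g i x \<noteq> 0" using sum.not_neutral_contains_not_neutral by blast
  then show "x \<in> (\<Union>i\<in>I. supp (g i))" by (auto simp: supp_def)
qed

lemma finite_supp_sum:
  "finite I \<Longrightarrow> (\<And>i. i \<in> I \<Longrightarrow> finite (supp (g i))) \<Longrightarrow>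
    finite (supp (\<Sum>i\<in>I. g i :: _ \<Rightarrow> 'k::comm_monoid_add))"
  by (rule finite_subset[OF supp_sum_subset]) auto

lemma push_superset:
  assumes "finite A" "supp v \<subseteq> A"
  shows "push f v y = (\<Sum>x | x \<in> A \<and> f x = y. v x)"
  unfolding push_def
  by (rule sum.mono_neutral_left) (use assms in \<open>auto simp: supp_def\<close>)

lemma supp_push: "supp (push f v) \<subseteq> f ` supp v"
proof
  fix y assume "y \<in> supp (push f v)"
  then have "(\<Sum>x | x \<in> supp v \<and> f x = y. v x) \<noteq> 0" by (simp add: supp_def push_def)
  then obtain x where "x \<in> supp v" "f x = y"
    using sum.not_neutral_contains_not_neutral by blast
  then show "y \<in> f ` supp v" by auto
qed

lemma finite_supp_push: "finite (supp v) \<Longrightarrow> finite (supp (push f v))"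
  by (rule finite_surj[OF _ supp_push])

lemma push_cong: "(\<And>x. x \<in> supp v \<Longrightarrow> f x = g x) \<Longrightarrow> push f v = push g v"
  unfolding push_def by (intro ext sum.cong) auto

lemma push_zero [simp]: "push f 0 = 0"
  by (auto simp: push_def)

lemma push_add:
  assumes "finite (supp v)" "finite (supp w)"
  shows "push f (v + w :: _ \<Rightarrow> 'k::comm_monoid_add) = push f v + push f w"
proof
  fix y
  let ?A = "supp v \<union> supp w"
  have "push f (v + w) y = (\<Sum>x | x \<in> ?A \<and> f x = y. v x + w x)"
    using push_superset[of ?A "v + w"] assms supp_add[of v w] by simp
  also have "\<dots> = push f v y + push f w y"
    using push_superset[of ?A v f y] push_superset[of ?A w f y] assms by (simp add: sum.distrib)
  finally show "push f (v + w) y = (push f v + push f w) y" by simp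
qed

lemma push_uminus: "push f (- v :: _ \<Rightarrow> 'k::ab_group_add) = - push f v"
  by (simp add: push_def fun_eq_iff sum_negf)

lemma push_diff:
  "finite (supp v) \<Longrightarrow> finite (supp w) \<Longrightarrow>
    push f (v - w :: _ \<Rightarrow> 'k::ab_group_add) = push f v - push f w"
  using push_add[of v "- w" f] by (simp add: push_uminus)

lemma push_smult: "push f (\<lambda>z. c * v z :: 'k::semiring_no_zero_divisors) = (\<lambda>y. c * push f v y)"
proof (cases "c = 0")
  case False
  then have "supp (\<lambda>z. c * v z) = supp v" by (auto simp: supp_def)
  then show ?thesis by (simp add: push_def sum_distrib_left)
qed (simp add: push_def supp_def)

lemma push_sum:
  "finite I \<Longrightarrow> (\<And>i. i \<in> I \<Longrightarrow> finite (supp (g i))) \<Longrightarrow>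
    push f (\<Sum>i\<in>I. g i :: _ \<Rightarrow> 'k::comm_monoid_add) = (\<Sum>i\<in>I. push f (g i))"
proof (induction I rule: finite_induct)
  case (insert i I)
  have "push f (\<Sum>i\<in>insert i I. g i) = push f (g i + (\<Sum>i\<in>I. g i))"
    by (simp only: sum.insert[OF insert.hyps])
  also have "\<dots> = push f (g i) + push f (\<Sum>i\<in>I. g i)"
    by (rule push_add) (use insert in \<open>auto intro: finite_supp_sum\<close>)
  also have "push f (\<Sum>i\<in>I. g i) = (\<Sum>i\<in>I. push f (g i))" using insert.IH insert.prems by simp
  finally show ?case by (simp only: sum.insert[OF insert.hyps])
qed simp

lemma push_comp:
  assumes "finite (supp v)"
  shows "push g (push f v) = push (g \<circ> f) (v :: _ \<Rightarrow> 'k::comm_monoid_add)"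
proof
  fix z
  have "push g (push f v) z = (\<Sum>y | y \<in> f ` supp v \<and> g y = z. push f v y)"
    by (rule push_superset) (use assms supp_push[of f v] in auto)
  also have "\<dots> = (\<Sum>y\<in>{y \<in> f ` supp v. g y = z}. \<Sum>x\<in>{x \<in> {x \<in> supp v. g (f x) = z}. f x = y}. v x)"
    unfolding push_def by (intro sum.cong refl) auto
  also have "\<dots> = (\<Sum>x | x \<in> supp v \<and> g (f x) = z. v x)"
    by (rule sum.group) (use assms in auto)
  finally show "push g (push f v) z = push (g \<circ> f) v z" by (simp add: push_def)
qed

lemma push_delta: "push f (delta x :: _ \<Rightarrow> 'k::{comm_monoid_add,zero_neq_one}) = delta (f x)"
proof
  fix y
  have "{x'. x' \<in> supp (delta x :: _ \<Rightarrow> 'k) \<and> f x' = y} = (if f x = y then {x} else {})" by auto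
  then show "push f (delta x :: _ \<Rightarrow> 'k) y = delta (f x) y" by (simp add: push_def delta_def)
qed

lemma push_id [simp]: "push id v = v"
proof
  fix y
  have "{x \<in> supp v. id x = y} = (if v y = 0 then {} else {y})" by (auto simp: supp_def)
  then show "push id v y = v y" by (simp add: push_def)
qed

lemma push_at_image:
  assumes "inj_on g A" "supp w \<subseteq> A" "y \<in> A"
  shows "push g w (g y) = (w y :: 'k::comm_monoid_add)"
proof -
  have "{x. x \<in> supp w \<and> g x = g y} = (if y \<in> supp w then {y} else {})"
    using assms by (auto dest: inj_onD)
  then show ?thesis by (auto simp: push_def supp_def)
qed

lemma push_eq_zero_imp_eq_zero:
  assumes "inj_on g A" "supp q \<subseteq> A" "push g q = (0 :: _ \<Rightarrow> 'k::comm_monoid_add)"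
  shows "q = 0"
proof
  fix w
  show "q w = 0 w"
  proof (cases "w \<in> A")
    case True
    then show ?thesis using push_at_image[OF assms(1,2) True] assms(3) by simp
  next
    case False
    then show ?thesis using assms(2) by (auto simp: supp_def)
  qed
qed

definition pairing :: "('x \<Rightarrow> 'k::semiring_0) \<Rightarrow> ('x \<Rightarrow> 'k) \<Rightarrow> 'k" where
  "pairing \<chi> w = (\<Sum>x\<in>supp w. \<chi> x * w x)"

lemma pairing_superset:
  "finite A \<Longrightarrow> supp w \<subseteq> A \<Longrightarrow> pairing \<chi> w = (\<Sum>x\<in>A. \<chi> x * w x)"
  unfolding pairing_def by (rule sum.mono_neutral_left) (auto simp: supp_def)

lemma pairing_zero [simp]: "pairing \<chi> 0 = 0"
  by (simp add: pairing_def)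

lemma pairing_delta [simp]: "pairing \<chi> (delta x :: _ \<Rightarrow> 'k::semiring_1) = \<chi> x"
  unfolding pairing_def supp_delta by (simp add: delta_def)

lemma pairing_add:
  assumes "finite (supp v)" "finite (supp w)"
  shows "pairing \<chi> (v + w) = pairing \<chi> v + pairing \<chi> w"
proof -
  let ?A = "supp v \<union> supp w"
  have "pairing \<chi> (v + w) = (\<Sum>x\<in>?A. \<chi> x * v x + \<chi> x * w x)"
    using pairing_superset[of ?A "v + w"] assms supp_add[of v w] by (simp add: distrib_left)
  then show ?thesis
    using pairing_superset[of ?A v \<chi>] pairing_superset[of ?A w \<chi>] assms by (simp add: sum.distrib)
qed

lemma pairing_smult:
  "pairing \<chi> (\<lambda>z. c * v z :: 'k::{comm_semiring_0,semiring_no_zero_divisors}) = c * pairing \<chi> v"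
proof (cases "c = 0")
  case False
  then have "supp (\<lambda>z. c * v z) = supp v" by (auto simp: supp_def)
  then show ?thesis by (simp add: pairing_def sum_distrib_left algebra_simps)
qed (simp add: pairing_def supp_def)

lemma pairing_diff:
  "finite (supp v) \<Longrightarrow> finite (supp w) \<Longrightarrow> pairing \<chi> (v - w :: _ \<Rightarrow> 'k::ring) = pairing \<chi> v - pairing \<chi> w"
  using pairing_add[of v "- w" \<chi>] by (simp add: pairing_def sum_negf)

lemma pairing_sum:
  "finite I \<Longrightarrow> (\<And>i. i \<in> I \<Longrightarrow> finite (supp (g i))) \<Longrightarrow>
    pairing \<chi> (\<Sum>i\<in>I. g i) = (\<Sum>i\<in>I. pairing \<chi> (g i))"
proof (induction I rule: finite_induct)
  case (insert i I)
  have "pairing \<chi> (\<Sum>i\<in>insert i I. g i) = pairing \<chi> (g i + (\<Sum>i\<in>I. g i))"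
    by (simp only: sum.insert[OF insert.hyps])
  also have "\<dots> = pairing \<chi> (g i) + pairing \<chi> (\<Sum>i\<in>I. g i)"
    by (rule pairing_add) (use insert in \<open>auto intro: finite_supp_sum\<close>)
  also have "pairing \<chi> (\<Sum>i\<in>I. g i) = (\<Sum>i\<in>I. pairing \<chi> (g i))" using insert.IH insert.prems by simp
  finally show ?case by (simp only: sum.insert[OF insert.hyps])
qed simp

lemma pairing_sum_smult:
  assumes "finite F" "\<And>i. i \<in> F \<Longrightarrow> finite (supp (g i))"
  shows "pairing \<chi> (\<lambda>y. \<Sum>i\<in>F. c i * g i y :: 'k::{comm_semiring_0,semiring_no_zero_divisors}) =
    (\<Sum>i\<in>F. c i * pairing \<chi> (g i))"
proof -
  have "(\<lambda>y. \<Sum>i\<in>F. c i * g i y) = (\<Sum>i\<in>F. (\<lambda>y. c i * g i y))" by (simp add: fun_eq_iff sum_fun_apply)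
  moreover have "finite (supp (\<lambda>y. c i * g i y))" if "i \<in> F" for i
    using assms(2)[OF that] supp_smult by (rule finite_subset[rotated])
  ultimately show ?thesis using assms(1) by (simp add: pairing_sum pairing_smult)
qed

lemma pairing_cong: "(\<And>x. x \<in> supp w \<Longrightarrow> \<chi> x = \<chi>' x) \<Longrightarrow> pairing \<chi> w = pairing \<chi>' w"
  unfolding pairing_def by (intro sum.cong) auto

lemma pairing_push:
  assumes "finite (supp v)"
  shows "pairing \<chi> (push f v) = pairing (\<chi> \<circ> f) v"
proof -
  have "pairing \<chi> (push f v) = (\<Sum>y\<in>f ` supp v. \<Sum>x | x \<in> supp v \<and> f x = y. \<chi> (f x) * v x)"
    using pairing_superset[of "f ` supp v" "push f v" \<chi>] assms supp_push[of f v]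
    by (auto simp: push_def sum_distrib_left intro!: sum.cong)
  also have "\<dots> = (\<Sum>x\<in>supp v. \<chi> (f x) * v x)"
    by (rule sum.group) (use assms in auto)
  finally show ?thesis by (simp add: pairing_def)
qed

lemma finite_supp_delta_diff [simp]:
  "finite (supp (delta x - delta y :: _ \<Rightarrow> 'k::{group_add,zero_neq_one}))"
  by (rule finite_subset[OF supp_diff]) simp

lemma lspan_diff: "v \<in> lspan G \<Longrightarrow> w \<in> lspan G \<Longrightarrow> v - w \<in> lspan G"
proof -
  assume "v \<in> lspan G" "w \<in> lspan G"
  then have "v + (\<lambda>z. (-1) * w z) \<in> lspan G" by (intro lspan.add lspan.smult)
  moreover have "v + (\<lambda>z. (-1) * w z) = v - w" by (auto simp: fun_eq_iff)
  ultimately show ?thesis by simp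
qed

lemma lspan_sum: "finite I \<Longrightarrow> (\<And>i. i \<in> I \<Longrightarrow> g i \<in> lspan G) \<Longrightarrow> (\<Sum>i\<in>I. g i) \<in> lspan G"
  by (induction I rule: finite_induct) (auto intro: lspan.zero lspan.add)

lemma lspan_finite_supp:
  "v \<in> lspan G \<Longrightarrow> (\<And>g. g \<in> G \<Longrightarrow> finite (supp g)) \<Longrightarrow> finite (supp v)"
proof (induction v rule: lspan.induct)
  case (add v w)
  then show ?case by (meson finite_UnI finite_subset supp_add)
next
  case (smult v c)
  then show ?case using supp_smult finite_subset by metis
qed simp_all

lemma lspan_pairing_eq_zero:
  assumes "v \<in> lspan G" "\<And>g. g \<in> G \<Longrightarrow> finite (supp g)" "\<And>g. g \<in> G \<Longrightarrow> pairing \<chi> g = 0"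
  shows "pairing \<chi> v = 0"
  using assms
proof (induction v rule: lspan.induct)
  case (add v w)
  then show ?case using lspan_finite_supp pairing_add by (metis add.right_neutral)
qed (simp_all add: pairing_smult)

lemma lspan_linear_image:
  assumes "v \<in> lspan G" "\<And>g. g \<in> G \<Longrightarrow> finite (supp g)" "\<And>g. g \<in> G \<Longrightarrow> L g \<in> lspan G'"
    and "\<And>v w. finite (supp v) \<Longrightarrow> finite (supp w) \<Longrightarrow> L (v + w) = L v + L w"
    and "\<And>v c. L (\<lambda>z. c * v z) = (\<lambda>y. c * L v y)"
  shows "L v \<in> lspan G'"
  using assms(1)
proof (induction v rule: lspan.induct)
  case zero
  have "L (\<lambda>z. 0 * (0::'a \<Rightarrow> 'b) z) = (\<lambda>y. 0 * L 0 y)" by (rule assms(5))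
  then have "L 0 = 0" by (simp only: mult_zero_left zero_fun_def[symmetric])
  then show ?case using lspan.zero by metis
next
  case (add v w)
  then show ?case using assms(2,4) lspan_finite_supp by (metis lspan.add)
qed (simp_all add: assms(3,5) lspan.smult)

lemma delta_expand:
  "finite (supp w) \<Longrightarrow> w = (\<Sum>x\<in>supp w. (\<lambda>z. w x * delta x z :: 'k::semiring_1))"
  by (auto simp: fun_eq_iff sum_fun_apply delta_def supp_def if_distrib cong: if_cong)

lemma eq_zero_if_level_set_pairings_vanish:
  fixes u :: "'x \<Rightarrow> 'k::field_char_0"
  assumes "finite (supp u)" "\<And>c. c \<noteq> 0 \<Longrightarrow> pairing (\<lambda>w. if u w = c then 1 else 0) u = 0"
  shows "u = 0"
proof (rule ccontr)
  assume "u \<noteq> 0"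
  then obtain w0 where w0: "u w0 \<noteq> 0" by (auto simp: fun_eq_iff)
  let ?L = "{w \<in> supp u. u w = u w0}"
  have "pairing (\<lambda>w. if u w = u w0 then 1 else 0) u = (\<Sum>w\<in>supp u. if u w = u w0 then u w else 0)"
    unfolding pairing_def by (intro sum.cong) auto
  also have "\<dots> = (\<Sum>w\<in>?L. u w)" by (rule sum.inter_filter[OF assms(1), symmetric])
  also have "\<dots> = (\<Sum>w\<in>?L. u w0)" by (rule sum.cong) auto
  also have "\<dots> = of_nat (card ?L) * u w0" by simp
  also have "\<dots> \<noteq> 0" using w0 assms(1) by (auto simp: supp_def)
  finally show False using assms(2) w0 by blast
qed

definition zeta_transform :: "('x \<Rightarrow> 'x \<Rightarrow> bool) \<Rightarrow> ('x \<Rightarrow> 'k::comm_monoid_add) \<Rightarrow> 'x \<Rightarrow> 'k" where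
  "zeta_transform R w b = (\<Sum>x | x \<in> supp w \<and> R x b. w x)"

lemma zeta_transform_superset:
  "finite A \<Longrightarrow> supp w \<subseteq> A \<Longrightarrow> zeta_transform R w b = (\<Sum>x | x \<in> A \<and> R x b. w x)"
  unfolding zeta_transform_def by (rule sum.mono_neutral_left) (auto simp: supp_def)

lemma zeta_transform_diff:
  assumes "finite (supp v)" "finite (supp w)"
  shows "zeta_transform R (v - w) b = zeta_transform R v b - (zeta_transform R w b :: 'k::ab_group_add)"
proof -
  let ?A = "supp v \<union> supp w"
  have fin: "finite ?A" using assms by simp
  have "zeta_transform R (v - w) b = (\<Sum>x | x \<in> ?A \<and> R x b. v x - w x)"
    using zeta_transform_superset[OF fin supp_diff[of v w]] by simp
  also have "\<dots> = zeta_transform R v b - zeta_transform R w b"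
    using zeta_transform_superset[OF fin, where w = v] zeta_transform_superset[OF fin, where w = w]
    by (simp add: sum_subtractf)
  finally show ?thesis .
qed

lemma zeta_transform_eq_pairing:
  "finite (supp w) \<Longrightarrow> zeta_transform R w b = pairing (\<lambda>x. if R x b then 1 else 0) (w :: _ \<Rightarrow> 'k::semiring_1)"
  unfolding zeta_transform_def pairing_def by (simp add: sum.inter_filter) (auto intro: sum.cong)

section \<open>Moebius functions of locally finite posets\<close>

locale poset_on =
  fixes A :: "'a set" and R :: "'a \<Rightarrow> 'a \<Rightarrow> bool"
  assumes R_refl: "x \<in> A \<Longrightarrow> R x x"
    and R_antisym: "x \<in> A \<Longrightarrow> y \<in> A \<Longrightarrow> R x y \<Longrightarrow> R y x \<Longrightarrow> x = y"
    and R_trans: "x \<in> A \<Longrightarrow> y \<in> A \<Longrightarrow> z \<in> A \<Longrightarrow> R x y \<Longrightarrow> R y z \<Longrightarrow> R x z"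
begin

lemma zeta_transform_eq_zero_imp_eq_zero:
  fixes w :: "'a \<Rightarrow> 'k::comm_monoid_add"
  assumes fin: "finite (supp w)" and sub: "supp w \<subseteq> A"
    and zeta: "\<And>b. b \<in> A \<Longrightarrow> zeta_transform R w b = 0"
  shows "w = 0"
proof (rule ccontr)
  let ?below = "\<lambda>b. {x \<in> supp w. R x b}"
  assume "w \<noteq> 0"
  then obtain b0 where "b0 \<in> supp w" by (auto simp: supp_def fun_eq_iff)
  then obtain m where m: "m \<in> supp w"
    and min: "\<And>b. b \<in> supp w \<Longrightarrow> card (?below m) \<le> card (?below b)"
    using ex_has_least_nat[of "\<lambda>b. b \<in> supp w" b0 "\<lambda>b. card (?below b)"] by blast
  have mA: "m \<in> A" using m sub by auto
  have "?below m = {m}"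
  proof (rule ccontr)
    assume "?below m \<noteq> {m}"
    moreover have "m \<in> ?below m" using m R_refl mA by auto
    ultimately obtain b where b: "b \<in> supp w" "R b m" "b \<noteq> m" by blast
    have bA: "b \<in> A" using b sub by auto
    have "?below b \<subset> ?below m"
    proof
      show "?below b \<subseteq> ?below m" using R_trans b bA mA sub by blast
      have "m \<notin> ?below b" using R_antisym[OF mA bA] b by auto
      then show "?below b \<noteq> ?below m" using m R_refl mA by auto
    qed
    then have "card (?below b) < card (?below m)" by (rule psubset_card_mono[rotated]) (use fin in auto)
    then show False using min[OF b(1)] by simp
  qed
  then have "zeta_transform R w m = w m" by (simp add: zeta_transform_def)
  then show False using zeta[OF mA] m by (simp add: supp_def)
qed

end

lemma poset_on_prod:
  assumes "poset_on A R" "poset_on B Q"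
  shows "poset_on (A \<times> B) (\<lambda>v w. R (fst v) (fst w) \<and> Q (snd v) (snd w))"
proof -
  interpret A: poset_on A R by fact
  interpret B: poset_on B Q by fact
  show ?thesis
  proof
    fix x assume "x \<in> A \<times> B"
    then show "R (fst x) (fst x) \<and> Q (snd x) (snd x)" by (auto intro: A.R_refl B.R_refl)
  next
    fix x y assume "x \<in> A \<times> B" "y \<in> A \<times> B"
      "R (fst x) (fst y) \<and> Q (snd x) (snd y)" "R (fst y) (fst x) \<and> Q (snd y) (snd x)"
    then show "x = y" by (metis A.R_antisym B.R_antisym mem_Times_iff prod_eq_iff)
  next
    fix x y z assume "x \<in> A \<times> B" "y \<in> A \<times> B" "z \<in> A \<times> B"
      "R (fst x) (fst y) \<and> Q (snd x) (snd y)" "R (fst y) (fst z) \<and> Q (snd y) (snd z)"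
    then show "R (fst x) (fst z) \<and> Q (snd x) (snd z)"
      using A.R_trans[of "fst x" "fst y" "fst z"] B.R_trans[of "snd x" "snd y" "snd z"] by (auto simp: mem_Times_iff)
  qed
qed

text \<open>
  Truncated Moebius recursion: with fuel at least the size of the interval it solves the
  recursion defining \<^const>\<open>mobius\<close>, so the definite description there denotes a solution.
\<close>

fun mobius_fuel :: "nat \<Rightarrow> 'a set \<Rightarrow> ('a \<Rightarrow> 'a \<Rightarrow> bool) \<Rightarrow> 'a \<Rightarrow> 'a \<Rightarrow> 'k::comm_ring_1" where
  "mobius_fuel 0 A R x y = 0"
| "mobius_fuel (Suc k) A R x y = (if x \<in> A \<and> y \<in> A \<and> R x y then
     (if x = y then 1 else - (\<Sum>z\<in>{z\<in>A. R x z \<and> R z y \<and> z \<noteq> y}. mobius_fuel k A R x z)) else 0)"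

locale locally_finite_poset = poset_on +
  assumes finite_interval: "x \<in> A \<Longrightarrow> y \<in> A \<Longrightarrow> finite {z\<in>A. R x z \<and> R z y}"
begin

definition interval :: "'a \<Rightarrow> 'a \<Rightarrow> 'a set" where
  "interval x y = {z\<in>A. R x z \<and> R z y}"

definition mobius_recursion :: "('a \<Rightarrow> 'a \<Rightarrow> 'k::comm_ring_1) \<Rightarrow> bool" where
  "mobius_recursion \<mu> \<longleftrightarrow> (\<forall>x y. \<mu> x y = (if x \<in> A \<and> y \<in> A \<and> R x y then
     (if x = y then 1 else - (\<Sum>z\<in>{z\<in>A. R x z \<and> R z y \<and> z \<noteq> y}. \<mu> x z)) else 0))"

lemma card_interval_less:
  assumes "x \<in> A" "y \<in> A" "z \<in> A" "R x z" "R z y" "z \<noteq> y"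
  shows "card (interval x z) < card (interval x y)"
proof (rule psubset_card_mono)
  show "finite (interval x y)" using finite_interval assms by (simp add: interval_def)
  have "y \<notin> interval x z" "y \<in> interval x y"
    unfolding interval_def using R_antisym R_trans R_refl assms by blast+
  moreover have "interval x z \<subseteq> interval x y" unfolding interval_def using R_trans assms by blast
  ultimately show "interval x z \<subset> interval x y" by blast
qed

lemma mobius_fuel_sufficient:
  "card (interval x y) \<le> k \<Longrightarrow> (mobius_fuel k A R x y :: 'k::comm_ring_1) = mobius_fuel (card (interval x y)) A R x y"
proof (induction "card (interval x y)" arbitrary: x y k rule: less_induct)
  case less
  show ?case
  proof (cases "x \<in> A \<and> y \<in> A \<and> R x y")
    case False
    then show ?thesis by (cases k; cases "card (interval x y)") auto
  next
    case True
    then have "interval x y \<noteq> {}" "finite (interval x y)"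
      using R_refl finite_interval by (auto simp: interval_def)
    then obtain j where j: "card (interval x y) = Suc j" by (metis card_0_eq not0_implies_Suc)
    then obtain i where k: "k = Suc i" using less.prems by (cases k) auto
    have "(mobius_fuel i A R x z :: 'k) = mobius_fuel j A R x z"
      if "z \<in> {z\<in>A. R x z \<and> R z y \<and> z \<noteq> y}" for z
    proof -
      have lt: "card (interval x z) < card (interval x y)" using card_interval_less True that by blast
      then have "card (interval x z) \<le> i" "card (interval x z) \<le> j" using less.prems j k by auto
      then show ?thesis using less.hyps[OF lt] by metis
    qed
    then show ?thesis using True j k by simp
  qed
qed

lemma mobius_recursion_fuel:
  "mobius_recursion (\<lambda>x y. mobius_fuel (card (interval x y)) A R x y :: 'k::comm_ring_1)"
  unfolding mobius_recursion_def
proof (intro allI)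
  fix x y
  show "(mobius_fuel (card (interval x y)) A R x y :: 'k) = (if x \<in> A \<and> y \<in> A \<and> R x y then
     (if x = y then 1 else - (\<Sum>z\<in>{z\<in>A. R x z \<and> R z y \<and> z \<noteq> y}. mobius_fuel (card (interval x z)) A R x z))
     else 0)"
  proof (cases "x \<in> A \<and> y \<in> A \<and> R x y")
    case True
    then have "interval x y \<noteq> {}" "finite (interval x y)"
      using R_refl finite_interval by (auto simp: interval_def)
    then obtain j where j: "card (interval x y) = Suc j" by (metis card_0_eq not0_implies_Suc)
    have "(mobius_fuel j A R x z :: 'k) = mobius_fuel (card (interval x z)) A R x z"
      if "z \<in> {z\<in>A. R x z \<and> R z y \<and> z \<noteq> y}" for z
    proof -
      have "card (interval x z) \<le> j" using card_interval_less[of x y z] True that j by simp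
      then show ?thesis by (rule mobius_fuel_sufficient)
    qed
    then show ?thesis using True j by simp
  next
    case False
    then show ?thesis by (cases "card (interval x y)") (simp_all only: mobius_fuel.simps if_not_P if_False)
  qed
qed

lemma mobius_recursion_unique:
  assumes "mobius_recursion \<mu>" "mobius_recursion \<mu>'"
  shows "\<mu> = \<mu>'"
proof (intro ext)
  fix x y
  show "\<mu> x y = \<mu>' x y"
  proof (induction "card (interval x y)" arbitrary: y rule: less_induct)
    case less
    have "\<mu> x z = \<mu>' x z" if "z \<in> {z\<in>A. R x z \<and> R z y \<and> z \<noteq> y}" "x \<in> A" "y \<in> A" for z
      using less card_interval_less that by blast
    then show ?case using assms unfolding mobius_recursion_def by (metis (no_types, lifting) sum.cong)
  qed
qed

lemma mobius_recursion_mobius: "mobius_recursion (mobius A R :: 'a \<Rightarrow> 'a \<Rightarrow> 'k::comm_ring_1)"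
proof -
  have "mobius A R = (THE \<mu> :: 'a \<Rightarrow> 'a \<Rightarrow> 'k. mobius_recursion \<mu>)"
    by (simp only: mobius_def mobius_recursion_def)
  moreover have "mobius_recursion (THE \<mu> :: 'a \<Rightarrow> 'a \<Rightarrow> 'k. mobius_recursion \<mu>)"
    by (rule theI[of mobius_recursion, OF mobius_recursion_fuel])
      (rule mobius_recursion_unique[OF _ mobius_recursion_fuel])
  ultimately show ?thesis by simp
qed

lemma mobius_rec:
  "(mobius A R x y :: 'k::comm_ring_1) = (if x \<in> A \<and> y \<in> A \<and> R x y then
     (if x = y then 1 else - (\<Sum>z\<in>{z\<in>A. R x z \<and> R z y \<and> z \<noteq> y}. mobius A R x z)) else 0)"
  using mobius_recursion_mobius[where 'k='k] unfolding mobius_recursion_def by blast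

lemma mobius_eq_zero: "\<not> (x \<in> A \<and> y \<in> A \<and> R x y) \<Longrightarrow> mobius A R x y = 0"
  by (simp only: mobius_rec[of x y] if_not_P if_False)

lemma mobius_refl: "x \<in> A \<Longrightarrow> mobius A R x x = 1"
  using mobius_rec[of x x] R_refl by simp

lemma mobius_less:
  "x \<in> A \<Longrightarrow> y \<in> A \<Longrightarrow> R x y \<Longrightarrow> x \<noteq> y \<Longrightarrow>
    mobius A R x y = - (\<Sum>z\<in>{z\<in>A. R x z \<and> R z y \<and> z \<noteq> y}. mobius A R x z)"
  by (subst mobius_rec) simp

lemma mobius_interval_sum:
  assumes "x \<in> A" "y \<in> A" "R x y"
  shows "(\<Sum>z\<in>interval x y. mobius A R x z :: 'k::comm_ring_1) = (if x = y then 1 else 0)"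
proof -
  let ?I = "{z\<in>A. R x z \<and> R z y \<and> z \<noteq> y}"
  have I: "interval x y = insert y ?I" unfolding interval_def using assms R_refl by auto
  have "finite ?I" using finite_interval[OF assms(1,2)] by (rule finite_subset[rotated]) auto
  then have sum: "(\<Sum>z\<in>interval x y. mobius A R x z :: 'k) = mobius A R x y + (\<Sum>z\<in>?I. mobius A R x z)"
    unfolding I by simp
  show ?thesis
  proof (cases "x = y")
    case True
    then have I_empty: "?I = {}" using R_antisym assms by blast
    show ?thesis using sum unfolding I_empty by (simp add: True mobius_refl[OF assms(2)])
  next
    case False
    then have "(mobius A R x y :: 'k) = - (\<Sum>z\<in>?I. mobius A R x z)" by (rule mobius_less[OF assms])
    then show ?thesis using sum False by simp
  qed
qed

lemma zeta_transform_mobius: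
  assumes "x \<in> A" "b \<in> A"
  shows "zeta_transform R (mobius A R x :: 'a \<Rightarrow> 'k::comm_ring_1) b = (if x = b then 1 else 0)"
proof (cases "R x b")
  case True
  have "zeta_transform R (mobius A R x :: 'a \<Rightarrow> 'k) b = (\<Sum>z\<in>interval x b. mobius A R x z)"
    unfolding zeta_transform_def
    by (rule sum.mono_neutral_left)
      (use finite_interval assms mobius_eq_zero in \<open>auto simp: interval_def supp_def\<close>)
  then show ?thesis using mobius_interval_sum[OF assms True] by simp
next
  case False
  have below_empty: "{z \<in> supp (mobius A R x :: 'a \<Rightarrow> 'k). R z b} = {}"
  proof (intro equalityI subsetI)
    fix z assume "z \<in> {z \<in> supp (mobius A R x :: 'a \<Rightarrow> 'k). R z b}"
    then have "mobius A R x z \<noteq> (0::'k)" "R z b" by (auto simp: supp_def)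
    then have "z \<in> A" "R x z" using mobius_eq_zero by blast+
    then show "z \<in> {}" using R_trans[of x z b] assms False \<open>R z b\<close> by blast
  qed simp
  moreover have "x \<noteq> b" using False R_refl assms by blast
  then show ?thesis unfolding zeta_transform_def below_empty by simp
qed

lemma automorphism_image_strict_interval:
  assumes h: "bij_betw h A A" and hR: "\<And>a b. a \<in> A \<Longrightarrow> b \<in> A \<Longrightarrow> R (h a) (h b) \<longleftrightarrow> R a b"
    and x: "x \<in> A" and y: "y \<in> A"
  shows "h ` {z\<in>A. R x z \<and> R z y \<and> z \<noteq> y} = {z\<in>A. R (h x) z \<and> R z (h y) \<and> z \<noteq> h y}"
proof
  show "h ` {z\<in>A. R x z \<and> R z y \<and> z \<noteq> y} \<subseteq> {z\<in>A. R (h x) z \<and> R z (h y) \<and> z \<noteq> h y}"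
    using h hR x y by (auto simp: bij_betw_def inj_on_def)
  show "{z\<in>A. R (h x) z \<and> R z (h y) \<and> z \<noteq> h y} \<subseteq> h ` {z\<in>A. R x z \<and> R z y \<and> z \<noteq> y}"
  proof
    fix z assume z: "z \<in> {z\<in>A. R (h x) z \<and> R z (h y) \<and> z \<noteq> h y}"
    then obtain z' where "z' \<in> A" "z = h z'" using h by (auto simp: bij_betw_def)
    then show "z \<in> h ` {z\<in>A. R x z \<and> R z y \<and> z \<noteq> y}" using z hR x y by auto
  qed
qed

lemma mobius_automorphism:
  assumes h: "bij_betw h A A" and hR: "\<And>a b. a \<in> A \<Longrightarrow> b \<in> A \<Longrightarrow> R (h a) (h b) \<longleftrightarrow> R a b"
    and "x \<in> A" "y \<in> A"
  shows "(mobius A R (h x) (h y) :: 'k::comm_ring_1) = mobius A R x y"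
proof -
  define \<mu> :: "'a \<Rightarrow> 'a \<Rightarrow> 'k" where "\<mu> x y = (if x \<in> A \<and> y \<in> A then mobius A R (h x) (h y) else 0)" for x y
  have hA: "h a \<in> A" if "a \<in> A" for a using h that by (auto simp: bij_betw_def)
  have "mobius_recursion \<mu>"
    unfolding mobius_recursion_def
  proof (intro allI)
    fix x y
    show "\<mu> x y = (if x \<in> A \<and> y \<in> A \<and> R x y then
       (if x = y then 1 else - (\<Sum>z\<in>{z\<in>A. R x z \<and> R z y \<and> z \<noteq> y}. \<mu> x z)) else 0)"
    proof (cases "x \<in> A \<and> y \<in> A \<and> R x y \<and> x \<noteq> y")
      case True
      let ?I = "{z\<in>A. R x z \<and> R z y \<and> z \<noteq> y}"
      have "inj_on h ?I" using h by (auto simp: bij_betw_def intro: inj_on_subset)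
      then have "(\<Sum>z\<in>?I. \<mu> x z) = (\<Sum>z\<in>h ` ?I. mobius A R (h x) z)"
        using True by (simp add: sum.reindex \<mu>_def)
      also have "\<dots> = - mobius A R (h x) (h y)"
      proof -
        have "h x \<noteq> h y" using True h by (auto simp: bij_betw_def inj_on_def)
        then have "(mobius A R (h x) (h y) :: 'k) =
            - (\<Sum>z\<in>{z\<in>A. R (h x) z \<and> R z (h y) \<and> z \<noteq> h y}. mobius A R (h x) z)"
          using True hA hR by (intro mobius_less) auto
        then show ?thesis using automorphism_image_strict_interval[OF h hR, of x y] True by simp
      qed
      finally show ?thesis using True by (simp add: \<mu>_def)
    next
      case False
      then show ?thesis using mobius_rec[of "h x" "h y"] hR hA R_refl by (auto simp: \<mu>_def mobius_refl)
    qed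
  qed
  then have "\<mu> = mobius A R" using mobius_recursion_unique mobius_recursion_mobius by blast
  then show ?thesis using assms(3,4) by (metis \<mu>_def)
qed

lemma supp_mobius_sum:
  assumes up_closed: "\<And>x y. x \<in> U \<Longrightarrow> y \<in> A \<Longrightarrow> R x y \<Longrightarrow> y \<in> U"
  shows "supp (\<lambda>y. \<Sum>x\<in>U. c x * mobius A R x y :: 'k::comm_ring_1) \<subseteq> U"
proof
  fix y assume "y \<in> supp (\<lambda>y. \<Sum>x\<in>U. c x * mobius A R x y :: 'k)"
  then obtain x where "x \<in> U" "c x * mobius A R x y \<noteq> (0::'k)"
    using sum.not_neutral_contains_not_neutral by (force simp: supp_def)
  then have "x \<in> U" "y \<in> A" "R x y" using mobius_eq_zero by (metis mult_zero_right)+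
  then show "y \<in> U" by (rule up_closed)
qed

lemma zeta_transform_mobius_sum:
  assumes U: "finite U" "U \<subseteq> A" and up_closed: "\<And>x y. x \<in> U \<Longrightarrow> y \<in> A \<Longrightarrow> R x y \<Longrightarrow> y \<in> U"
    and z: "z \<in> A"
  shows "zeta_transform R (\<lambda>y. \<Sum>x\<in>U. c x * mobius A R x y) z = (if z \<in> U then c z else 0 :: 'k::comm_ring_1)"
proof -
  have "zeta_transform R (\<lambda>y. \<Sum>x\<in>U. c x * mobius A R x y) z =
      (\<Sum>y | y \<in> U \<and> R y z. \<Sum>x\<in>U. c x * mobius A R x y)"
    by (rule zeta_transform_superset[OF U(1) supp_mobius_sum[OF up_closed]])
  also have "\<dots> = (\<Sum>x\<in>U. c x * (\<Sum>y | y \<in> U \<and> R y z. mobius A R x y))"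
    unfolding sum_distrib_left by (rule sum.swap)
  also have "\<dots> = (\<Sum>x\<in>U. c x * zeta_transform R (mobius A R x) z)"
  proof (rule sum.cong[OF HOL.refl])
    fix x assume "x \<in> U"
    have "supp (mobius A R x :: 'a \<Rightarrow> 'k) \<subseteq> U"
      using mobius_eq_zero up_closed[OF \<open>x \<in> U\<close>] by (force simp: supp_def)
    then have "zeta_transform R (mobius A R x) z = (\<Sum>y | y \<in> U \<and> R y z. mobius A R x y :: 'k)"
      by (rule zeta_transform_superset[OF U(1)])
    then show "c x * (\<Sum>y | y \<in> U \<and> R y z. mobius A R x y) = c x * zeta_transform R (mobius A R x) z"
      by simp
  qed
  also have "\<dots> = (\<Sum>x\<in>U. if x = z then c x else 0)"
    using U(2) z by (intro sum.cong) (auto simp: zeta_transform_mobius)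
  finally show ?thesis using U(1) by simp
qed

lemma mobius_inversion:
  fixes p :: "'a \<Rightarrow> 'k::comm_ring_1"
  assumes fin: "finite (supp p)" and sub: "supp p \<subseteq> A"
    and up: "\<And>x. x \<in> A \<Longrightarrow> finite {y\<in>A. R x y}"
  defines "U \<equiv> {x\<in>A. \<exists>w\<in>supp p. R w x}"
  shows "finite U" and "p = (\<lambda>y. \<Sum>x\<in>U. zeta_transform R p x * mobius A R x y)"
proof -
  have "U = (\<Union>w\<in>supp p. {y\<in>A. R w y})" unfolding U_def using sub by auto
  then show fU: "finite U" using fin up sub by auto
  have UA: "U \<subseteq> A" and pU: "supp p \<subseteq> U" unfolding U_def using sub R_refl by auto
  have up_closed: "y \<in> U" if "x \<in> U" "y \<in> A" "R x y" for x y
    using that R_trans sub unfolding U_def by blast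
  define q where "q = (\<lambda>y. \<Sum>x\<in>U. zeta_transform R p x * mobius A R x y)"
  have qU: "supp q \<subseteq> U" unfolding q_def using up_closed by (rule supp_mobius_sum)
  have zeta_p: "zeta_transform R p z = 0" if "z \<in> A" "z \<notin> U" for z
  proof -
    have "{x. x \<in> supp p \<and> R x z} = {}" using that unfolding U_def by blast
    then show ?thesis unfolding zeta_transform_def by (metis sum.empty)
  qed
  have zeta_q: "zeta_transform R q z = zeta_transform R p z" if z: "z \<in> A" for z
  proof -
    have "zeta_transform R q z = (if z \<in> U then zeta_transform R p z else 0)"
      unfolding q_def by (rule zeta_transform_mobius_sum[OF fU UA up_closed z])
    then show ?thesis using zeta_p z by auto
  qed
  have "finite (supp q)" using fU qU by (rule finite_subset[rotated])
  then have "zeta_transform R (q - p) z = 0" if "z \<in> A" for z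
    using zeta_transform_diff[OF _ fin] zeta_q that by simp
  moreover have "supp (q - p) \<subseteq> U" using supp_diff[of q p] qU pU by blast
  ultimately have "q - p = 0"
    using UA fU by (intro zeta_transform_eq_zero_imp_eq_zero) (auto intro: finite_subset)
  then show "p = q" unfolding q_def by simp
qed

end

section \<open>Poset species\<close>

lemma finite_nset [simp]: "finite (nset n)"
  and card_nset [simp]: "card (nset n) = n"
  by (simp_all add: nset_def)

lemma std_strict_mono:
  assumes "finite S" "i \<in> S" "j \<in> S" "i < j"
  shows "std S i < std S j"
proof -
  have "{k\<in>S. k < i} \<subset> {k\<in>S. k < j}" using assms by auto
  then have "card {k\<in>S. k < i} < card {k\<in>S. k < j}"
    by (rule psubset_card_mono[rotated]) (use assms in auto)
  then show ?thesis by (simp add: std_def)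
qed

lemma inj_on_std: "finite S \<Longrightarrow> inj_on (std S) S"
  by (rule inj_onI) (metis linorder_neqE_nat std_strict_mono less_irrefl)

lemma std_in_nset:
  assumes "finite S" "i \<in> S"
  shows "std S i \<in> nset (card S)"
proof -
  have "{k\<in>S. k < i} \<subset> S" using assms by auto
  then have "card {k\<in>S. k < i} < card S" using assms psubset_card_mono by blast
  then show ?thesis by (simp add: std_def nset_def)
qed

lemma bij_betw_std:
  assumes "finite S"
  shows "bij_betw (std S) S (nset (card S))"
proof -
  have "std S ` S \<subseteq> nset (card S)" using std_in_nset assms by blast
  moreover have "card (std S ` S) = card S" using card_image inj_on_std assms by blast
  ultimately show ?thesis using card_subset_eq[OF finite_nset] inj_on_std assms
    by (simp add: bij_betw_def)
qed

lemma std_the_inv_into: "finite S \<Longrightarrow> j \<in> nset (card S) \<Longrightarrow> std S (the_inv_into S (std S) j) = j"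
  using f_the_inv_into_f_bij_betw[OF bij_betw_std] by blast

lemma bij_betw_std_conj:
  assumes "finite S" "bij_betw \<sigma> S S'"
  shows "bij_betw (std S' \<circ> \<sigma> \<circ> the_inv_into S (std S)) (nset (card S)) (nset (card S))"
proof -
  have "finite S'" using assms bij_betw_finite by blast
  then have "bij_betw (std S') S' (nset (card S))"
    using bij_betw_std bij_betw_same_card[OF assms(2)] by metis
  then show ?thesis
    using bij_betw_trans[OF bij_betw_the_inv_into[OF bij_betw_std[OF assms(1)]]
        bij_betw_trans[OF assms(2)]]
    by blast
qed

lemma permutes_glue:
  assumes "S' \<inter> T' = {}" "S \<inter> T = {}" "S' \<union> T' = N" "S \<union> T = N"
    and "bij_betw \<phi> S' S" "bij_betw \<psi> T' T"
  shows "(\<lambda>i. if i \<in> S' then \<phi> i else if i \<in> T' then \<psi> i else i) permutes N"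
    (is "?p permutes N")
proof (rule bij_imp_permutes)
  have "bij_betw ?p S' S" using assms(5) by (rule bij_betw_cong[THEN iffD1, rotated]) auto
  moreover have "bij_betw ?p T' T"
    using assms(6) by (rule bij_betw_cong[THEN iffD1, rotated]) (use assms(1) in auto)
  ultimately have "bij_betw ?p (S' \<union> T') (S \<union> T)"
    by (rule bij_betw_combine) (use assms in auto)
  then show "bij_betw ?p N N" using assms by simp
  show "\<And>x. x \<notin> N \<Longrightarrow> ?p x = x" using assms by auto
qed

definition nsubsets :: "nat \<Rightarrow> nat \<Rightarrow> nat set set" where
  "nsubsets n a = {S. S \<subseteq> nset n \<and> card S = a}"

lemma finite_nsubsets: "finite (nsubsets n a)"
  unfolding nsubsets_def by (rule finite_subset[of _ "Pow (nset n)"]) auto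

lemma card_nsubsets: "card (nsubsets n a) = n choose a"
  unfolding nsubsets_def using n_subsets[of "nset n" a] by simp

locale species =
  fixes H :: "nat set \<Rightarrow> 'a set" and le :: "nat set \<Rightarrow> 'a \<Rightarrow> 'a \<Rightarrow> bool"
    and rl :: "(nat \<Rightarrow> nat) \<Rightarrow> nat set \<Rightarrow> 'a \<Rightarrow> 'a"
  assumes species: "poset_species H le rl"
begin

lemma
  assumes "finite I"
  shows le_refl_H: "x \<in> H I \<Longrightarrow> le I x x"
    and le_antisym_H: "x \<in> H I \<Longrightarrow> y \<in> H I \<Longrightarrow> le I x y \<Longrightarrow> le I y x \<Longrightarrow> x = y"
    and le_trans_H: "x \<in> H I \<Longrightarrow> y \<in> H I \<Longrightarrow> z \<in> H I \<Longrightarrow> le I x y \<Longrightarrow> le I y z \<Longrightarrow> le I x z"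
    and finite_interval_H: "x \<in> H I \<Longrightarrow> y \<in> H I \<Longrightarrow> finite {z\<in>H I. le I x z \<and> le I z y}"
  using species[unfolded poset_species_def, THEN conjunct2, THEN conjunct1, rule_format, OF assms]
  by blast+

lemma locally_finite_poset_H:
  assumes "finite I"
  shows "locally_finite_poset (H I) (le I)"
  by unfold_locales
    (fact le_refl_H[OF assms] le_antisym_H[OF assms] le_trans_H[OF assms] finite_interval_H[OF assms])+

lemma poset_on_H: "finite I \<Longrightarrow> poset_on (H I) (le I)"
  using locally_finite_poset_H locally_finite_poset.axioms(1) by blast

lemma rl_in: "finite I \<Longrightarrow> inj_on \<sigma> I \<Longrightarrow> x \<in> H I \<Longrightarrow> rl \<sigma> I x \<in> H (\<sigma> ` I)"
  using species[unfolded poset_species_def, THEN conjunct2, THEN conjunct2, THEN conjunct1] by simp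

lemma rl_cong: "finite I \<Longrightarrow> x \<in> H I \<Longrightarrow> (\<And>i. i \<in> I \<Longrightarrow> \<sigma> i = \<tau> i) \<Longrightarrow> rl \<sigma> I x = rl \<tau> I x"
  using species[unfolded poset_species_def, THEN conjunct2, THEN conjunct2, THEN conjunct2,
      THEN conjunct1] by simp

lemma rl_id: "finite I \<Longrightarrow> x \<in> H I \<Longrightarrow> rl id I x = x"
  using species[unfolded poset_species_def, THEN conjunct2, THEN conjunct2, THEN conjunct2,
      THEN conjunct2, THEN conjunct1] by simp

lemma rl_comp: "finite I \<Longrightarrow> inj_on \<sigma> I \<Longrightarrow> inj_on \<tau> (\<sigma> ` I) \<Longrightarrow> x \<in> H I \<Longrightarrow>
    rl \<tau> (\<sigma> ` I) (rl \<sigma> I x) = rl (\<tau> \<circ> \<sigma>) I x"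
  using species[unfolded poset_species_def, THEN conjunct2, THEN conjunct2, THEN conjunct2,
      THEN conjunct2, THEN conjunct2, THEN conjunct1] by simp

lemma rl_mono: "finite I \<Longrightarrow> inj_on \<sigma> I \<Longrightarrow> x \<in> H I \<Longrightarrow> y \<in> H I \<Longrightarrow> le I x y \<Longrightarrow>
    le (\<sigma> ` I) (rl \<sigma> I x) (rl \<sigma> I y)"
  using species[unfolded poset_species_def, THEN conjunct2, THEN conjunct2, THEN conjunct2,
      THEN conjunct2, THEN conjunct2, THEN conjunct2] by simp

lemma rl_in_bij: "finite I \<Longrightarrow> bij_betw \<sigma> I J \<Longrightarrow> x \<in> H I \<Longrightarrow> rl \<sigma> I x \<in> H J"
  using rl_in by (metis bij_betw_def)

lemma rl_comp_bij:
  "finite I \<Longrightarrow> bij_betw \<sigma> I J \<Longrightarrow> bij_betw \<tau> J K \<Longrightarrow> x \<in> H I \<Longrightarrow>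
    rl \<tau> J (rl \<sigma> I x) = rl (\<tau> \<circ> \<sigma>) I x"
  using rl_comp by (metis bij_betw_def)

lemma rl_the_inv_into:
  assumes "finite I" "bij_betw \<sigma> I J" "x \<in> H I"
  shows "rl (the_inv_into I \<sigma>) J (rl \<sigma> I x) = x"
proof -
  have "rl (the_inv_into I \<sigma>) J (rl \<sigma> I x) = rl (the_inv_into I \<sigma> \<circ> \<sigma>) I x"
    using rl_comp_bij assms bij_betw_the_inv_into by blast
  also have "\<dots> = rl id I x"
    by (rule rl_cong) (use assms in \<open>auto simp: the_inv_into_f_f bij_betw_def\<close>)
  finally show ?thesis using rl_id assms by simp
qed

lemma bij_betw_rl:
  assumes "finite I" "bij_betw \<sigma> I J"
  shows "bij_betw (rl \<sigma> I) (H I) (H J)"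
proof (rule bij_betw_byWitness[where f' = "rl (the_inv_into I \<sigma>) J"])
  have J: "finite J" "bij_betw (the_inv_into I \<sigma>) J I"
    using assms bij_betw_finite bij_betw_the_inv_into by blast+
  show "\<forall>x\<in>H I. rl (the_inv_into I \<sigma>) J (rl \<sigma> I x) = x" using rl_the_inv_into assms by blast
  show "\<forall>y\<in>H J. rl \<sigma> I (rl (the_inv_into I \<sigma>) J y) = y"
  proof
    fix y assume y: "y \<in> H J"
    have "rl \<sigma> I (rl (the_inv_into I \<sigma>) J y) = rl (\<sigma> \<circ> the_inv_into I \<sigma>) J y"
      using rl_comp_bij J assms(2) y by blast
    also have "\<dots> = rl id J y"
      by (rule rl_cong) (use J y assms(2) in \<open>auto simp: f_the_inv_into_f_bij_betw\<close>)
    finally show "rl \<sigma> I (rl (the_inv_into I \<sigma>) J y) = y" using rl_id J y by simp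
  qed
  show "rl \<sigma> I ` H I \<subseteq> H J" using rl_in_bij assms by blast
  show "rl (the_inv_into I \<sigma>) J ` H J \<subseteq> H I" using rl_in_bij J by blast
qed

lemma rl_le_iff:
  assumes "finite I" "bij_betw \<sigma> I J" "x \<in> H I" "y \<in> H I"
  shows "le J (rl \<sigma> I x) (rl \<sigma> I y) \<longleftrightarrow> le I x y"
proof
  assume "le I x y" then show "le J (rl \<sigma> I x) (rl \<sigma> I y)"
    using rl_mono assms by (metis bij_betw_def)
next
  have J: "finite J" "bij_betw (the_inv_into I \<sigma>) J I"
    using assms bij_betw_finite bij_betw_the_inv_into by blast+
  assume "le J (rl \<sigma> I x) (rl \<sigma> I y)"
  then have "le I (rl (the_inv_into I \<sigma>) J (rl \<sigma> I x)) (rl (the_inv_into I \<sigma>) J (rl \<sigma> I y))"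
    using rl_mono[of J "the_inv_into I \<sigma>"] J rl_in_bij assms by (metis bij_betw_def)
  then show "le I x y" using rl_the_inv_into assms by simp
qed

lemma rl_std_conj:
  assumes "finite S" "y \<in> H S" "inj_on \<sigma> S" "bij_betw \<alpha> (nset (card S)) (nset (card S))"
    and "\<forall>i\<in>S. std (\<sigma> ` S) (\<sigma> i) = \<alpha> (std S i)"
  shows "rl (std (\<sigma> ` S)) (\<sigma> ` S) (rl \<sigma> S y) = rl \<alpha> (nset (card S)) (rl (std S) S y)"
proof -
  have "rl (std (\<sigma> ` S)) (\<sigma> ` S) (rl \<sigma> S y) = rl (std (\<sigma> ` S) \<circ> \<sigma>) S y"
    using rl_comp assms inj_on_std[of "\<sigma> ` S"] by simp
  also have "\<dots> = rl (\<alpha> \<circ> std S) S y" by (rule rl_cong) (use assms in auto)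
  also have "\<dots> = rl \<alpha> (nset (card S)) (rl (std S) S y)"
    using rl_comp_bij[OF assms(1) bij_betw_std[OF assms(1)] assms(4,2)] by simp
  finally show ?thesis .
qed

lemma tensor_ker_map_prod_rl:
  assumes "w \<in> H (nset a) \<times> H (nset b)"
    and "bij_betw \<alpha> (nset a) (nset a)" "bij_betw \<beta> (nset b) (nset b)"
  shows "(delta w - delta (map_prod (rl \<alpha> (nset a)) (rl \<beta> (nset b)) w) :: _ \<Rightarrow> 'k::field)
    \<in> tensor_ker H rl a b"
proof -
  obtain y z where w: "w = (y, z)" "y \<in> H (nset a)" "z \<in> H (nset b)" using assms(1) by auto
  have "rl \<alpha> (nset a) y \<in> H (nset a)" using rl_in_bij assms(2) w by simp
  then have "(delta (y, z) - delta (rl \<alpha> (nset a) y, z) :: _ \<Rightarrow> 'k)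
      + (delta (rl \<alpha> (nset a) y, z) - delta (rl \<alpha> (nset a) y, rl \<beta> (nset b) z)) \<in> tensor_ker H rl a b"
    unfolding tensor_ker_def using w assms(2,3) by (intro lspan.add lspan.gen) blast+
  then show ?thesis using w by simp
qed

lemma pairing_tensor_ker_eq_zero:
  assumes "w \<in> tensor_ker H rl a b"
    and "\<And>y z \<sigma>. y \<in> H (nset a) \<Longrightarrow> z \<in> H (nset b) \<Longrightarrow> bij_betw \<sigma> (nset a) (nset a) \<Longrightarrow>
       \<chi> (rl \<sigma> (nset a) y, z) = \<chi> (y, z)"
    and "\<And>y z \<tau>. y \<in> H (nset a) \<Longrightarrow> z \<in> H (nset b) \<Longrightarrow> bij_betw \<tau> (nset b) (nset b) \<Longrightarrow>
       \<chi> (y, rl \<tau> (nset b) z) = \<chi> (y, z)"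
  shows "pairing \<chi> (w :: _ \<Rightarrow> 'k::field) = 0"
  using assms(1) unfolding tensor_ker_def
proof (rule lspan_pairing_eq_zero)
  fix g :: "'a \<times> 'a \<Rightarrow> 'k"
  assume "g \<in> {delta (y, z) - delta (rl \<sigma> (nset a) y, z) | y z \<sigma>.
         y \<in> H (nset a) \<and> z \<in> H (nset b) \<and> bij_betw \<sigma> (nset a) (nset a)} \<union>
      {delta (y, z) - delta (y, rl \<tau> (nset b) z) | y z \<tau>.
         y \<in> H (nset a) \<and> z \<in> H (nset b) \<and> bij_betw \<tau> (nset b) (nset b)}"
  then obtain w w' where g: "g = delta w - delta w'" and "\<chi> w = \<chi> w'" using assms(2,3) by fastforce
  then show "finite (supp g)" "pairing \<chi> g = 0" by (simp_all add: pairing_diff)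
qed

lemma coinv_ker_generator_in:
  "x \<in> H (nset n) \<Longrightarrow> bij_betw \<sigma> (nset n) (nset n) \<Longrightarrow>
    (delta x - delta (rl \<sigma> (nset n) x) :: _ \<Rightarrow> 'k::field) \<in> coinv_ker H rl n"
  unfolding coinv_ker_def by (rule lspan.gen) blast

lemma pairing_coinv_ker_eq_zero:
  assumes "w \<in> coinv_ker H rl n"
    and "\<And>x \<sigma>. x \<in> H (nset n) \<Longrightarrow> bij_betw \<sigma> (nset n) (nset n) \<Longrightarrow> \<chi> (rl \<sigma> (nset n) x) = \<chi> x"
  shows "pairing \<chi> (w :: _ \<Rightarrow> 'k::field) = 0"
  using assms(1) unfolding coinv_ker_def
proof (rule lspan_pairing_eq_zero)
  fix g :: "'a \<Rightarrow> 'k"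
  assume "g \<in> {delta x - delta (rl \<sigma> (nset n) x) | x \<sigma>. x \<in> H (nset n) \<and> bij_betw \<sigma> (nset n) (nset n)}"
  then obtain x \<sigma> where g: "g = delta x - delta (rl \<sigma> (nset n) x)" and "\<chi> (rl \<sigma> (nset n) x) = \<chi> x"
    using assms(2) by blast
  then show "finite (supp g)" "pairing \<chi> g = 0" by (simp_all add: pairing_diff)
qed

lemma diff_push_rl_in_coinv_ker:
  assumes "lin (H (nset n)) w" "bij_betw \<sigma> (nset n) (nset n)"
  shows "w - push (rl \<sigma> (nset n)) w \<in> coinv_ker H rl n"
proof -
  have fin: "finite (supp w)" and sub: "supp w \<subseteq> H (nset n)" using assms(1) by (auto simp: lin_def)
  have "w - push (rl \<sigma> (nset n)) w = (\<Sum>x\<in>supp w. (\<lambda>z. w x * (delta x - delta (rl \<sigma> (nset n) x)) z))"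
  proof
    fix z
    have "(\<Sum>x\<in>supp w. (\<lambda>z. w x * (delta x - delta (rl \<sigma> (nset n) x)) z)) z
        = (\<Sum>x\<in>supp w. w x * delta x z) - (\<Sum>x\<in>supp w. w x * delta (rl \<sigma> (nset n) x) z)"
      unfolding sum_fun_apply sum_subtractf[symmetric] by (rule sum.cong) (simp_all add: right_diff_distrib)
    also have "(\<Sum>x\<in>supp w. w x * delta x z) = w z"
      using fun_cong[OF delta_expand[OF fin], of z] unfolding sum_fun_apply by (rule sym)
    also have "(\<Sum>x\<in>supp w. w x * delta (rl \<sigma> (nset n) x) z) = push (rl \<sigma> (nset n)) w z"
      unfolding push_def sum.inter_filter[OF fin] by (rule sum.cong) (auto simp: delta_def)
    finally show "(w - push (rl \<sigma> (nset n)) w) z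
        = (\<Sum>x\<in>supp w. (\<lambda>z. w x * (delta x - delta (rl \<sigma> (nset n) x)) z)) z"
      by simp
  qed
  also have "\<dots> \<in> coinv_ker H rl n"
    unfolding coinv_ker_def
    by (intro lspan_sum[OF fin] lspan.smult)
      (use coinv_ker_generator_in[of _ n \<sigma>, unfolded coinv_ker_def] sub assms(2) in blast)
  finally show ?thesis .
qed

definition perm_invariant :: "nat \<Rightarrow> ('a \<Rightarrow> 'k::comm_monoid_add) \<Rightarrow> bool" where
  "perm_invariant n p \<longleftrightarrow> (\<forall>\<pi>. \<pi> permutes nset n \<longrightarrow> push (rl \<pi> (nset n)) p = p)"

lemma supp_push_rl:
  assumes "supp v \<subseteq> H (nset n)" "bij_betw \<sigma> (nset n) (nset n)"
  shows "supp (push (rl \<sigma> (nset n)) v) \<subseteq> H (nset n)"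
proof -
  have "supp (push (rl \<sigma> (nset n)) v) \<subseteq> rl \<sigma> (nset n) ` supp v" by (rule supp_push)
  also have "\<dots> \<subseteq> H (nset n)" using assms rl_in_bij[OF finite_nset] by blast
  finally show ?thesis .
qed

lemma push_rl_comp:
  assumes "finite (supp v)" "supp v \<subseteq> H (nset n)"
    and "bij_betw \<sigma> (nset n) (nset n)" "bij_betw \<tau> (nset n) (nset n)"
  shows "push (rl \<tau> (nset n)) (push (rl \<sigma> (nset n)) v) = push (rl (\<tau> \<circ> \<sigma>) (nset n)) (v :: _ \<Rightarrow> 'k::comm_monoid_add)"
  unfolding push_comp[OF assms(1)]
  by (rule push_cong) (use assms rl_comp_bij[OF finite_nset] in auto)

definition symmetrize :: "nat \<Rightarrow> ('a \<Rightarrow> 'k::field_char_0) \<Rightarrow> 'a \<Rightarrow> 'k" where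
  "symmetrize n v = (\<lambda>y. inverse (fact n) * (\<Sum>\<sigma> | \<sigma> permutes nset n. push (rl \<sigma> (nset n)) v) y)"

lemma lin_symmetrize:
  assumes v: "lin (H (nset n)) v"
  shows "lin (H (nset n)) (symmetrize n v)"
proof -
  let ?s = "\<Sum>\<sigma> | \<sigma> permutes nset n. push (rl \<sigma> (nset n)) v"
  have fin: "finite (supp v)" and sub: "supp v \<subseteq> H (nset n)" using v by (auto simp: lin_def)
  have "supp ?s \<subseteq> (\<Union>\<sigma>\<in>{\<sigma>. \<sigma> permutes nset n}. supp (push (rl \<sigma> (nset n)) v))" by (rule supp_sum_subset)
  also have "\<dots> \<subseteq> H (nset n)" using supp_push_rl[OF sub permutes_imp_bij] by blast
  finally have "supp ?s \<subseteq> H (nset n)" .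
  moreover have "finite (supp ?s)"
    using finite_permutations[OF finite_nset] finite_supp_push[OF fin] by (rule finite_supp_sum)
  moreover have "supp (symmetrize n v) \<subseteq> supp ?s" unfolding symmetrize_def by (rule supp_smult)
  ultimately show ?thesis unfolding lin_def by (blast intro: finite_subset)
qed

lemma perm_invariant_symmetrize:
  assumes v: "lin (H (nset n)) v"
  shows "perm_invariant n (symmetrize n v)"
  unfolding perm_invariant_def
proof (intro allI impI)
  fix \<pi> assume \<pi>: "\<pi> permutes nset n"
  let ?G = "{\<sigma>. \<sigma> permutes nset n}"
  have fin: "finite (supp v)" and sub: "supp v \<subseteq> H (nset n)" using v by (auto simp: lin_def)
  have "push (rl \<pi> (nset n)) (\<Sum>\<sigma>\<in>?G. push (rl \<sigma> (nset n)) v)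
      = (\<Sum>\<sigma>\<in>?G. push (rl \<pi> (nset n)) (push (rl \<sigma> (nset n)) v))"
    using finite_permutations[OF finite_nset] finite_supp_push[OF fin] by (rule push_sum)
  also have "\<dots> = (\<Sum>\<sigma>\<in>?G. push (rl (\<pi> \<circ> \<sigma>) (nset n)) v)"
    using push_rl_comp[OF fin sub permutes_imp_bij permutes_imp_bij[OF \<pi>]] by simp
  also have "\<dots> = (\<Sum>\<sigma>\<in>?G. push (rl \<sigma> (nset n)) v)"
    by (rule setum_permutations_compose_left[OF \<pi>, symmetric])
  finally show "push (rl \<pi> (nset n)) (symmetrize n v) = symmetrize n v"
    by (simp add: symmetrize_def push_smult)
qed

lemma diff_symmetrize_in_coinv_ker:
  fixes v :: "'a \<Rightarrow> 'k::field_char_0"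
  assumes v: "lin (H (nset n)) v"
  shows "v - symmetrize n v \<in> coinv_ker H rl n"
proof -
  let ?G = "{\<sigma>. \<sigma> permutes nset n}" and ?c = "inverse (fact n) :: 'k"
  have "v - symmetrize n v = (\<lambda>z. ?c * (\<Sum>\<sigma>\<in>?G. v - push (rl \<sigma> (nset n)) v) z)"
  proof
    fix z
    have "card ?G = fact n" using card_permutations[of "nset n" n] by simp
    then have "(\<Sum>\<sigma>\<in>?G. v - push (rl \<sigma> (nset n)) v) z = fact n * v z - (\<Sum>\<sigma>\<in>?G. push (rl \<sigma> (nset n)) v) z"
      unfolding sum_fun_apply by (simp add: sum_subtractf)
    then show "(v - symmetrize n v) z = ?c * (\<Sum>\<sigma>\<in>?G. v - push (rl \<sigma> (nset n)) v) z"
      by (simp add: symmetrize_def field_simps)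
  qed
  also have "\<dots> \<in> coinv_ker H rl n"
    unfolding coinv_ker_def
    by (intro lspan.smult lspan_sum[OF finite_permutations[OF finite_nset]], fold coinv_ker_def)
      (auto intro: diff_push_rl_in_coinv_ker[OF v] permutes_imp_bij)
  finally show ?thesis .
qed

lemma tensor_ker_invariant_eq_zero:
  fixes u :: "'a \<times> 'a \<Rightarrow> 'k::field_char_0"
  assumes u: "u \<in> tensor_ker H rl a b"
    and inv: "\<And>w \<sigma> \<tau>. w \<in> H (nset a) \<times> H (nset b) \<Longrightarrow> bij_betw \<sigma> (nset a) (nset a) \<Longrightarrow>
      bij_betw \<tau> (nset b) (nset b) \<Longrightarrow> u (map_prod (rl \<sigma> (nset a)) (rl \<tau> (nset b)) w) = u w"
  shows "u = 0"
proof (rule eq_zero_if_level_set_pairings_vanish)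
  show "finite (supp u)" using u unfolding tensor_ker_def by (rule lspan_finite_supp) auto
  fix c :: 'k
  show "pairing (\<lambda>w. if u w = c then 1 else 0) u = 0"
  proof (rule pairing_tensor_ker_eq_zero[OF u])
    fix y z \<sigma> assume "y \<in> H (nset a)" "z \<in> H (nset b)" "bij_betw \<sigma> (nset a) (nset a)"
    then show "(if u (rl \<sigma> (nset a) y, z) = c then 1 else 0) = (if u (y, z) = c then 1 else 0)"
      using inv[of "(y, z)" \<sigma> id] rl_id[OF finite_nset] by simp
  next
    fix y z \<tau> assume "y \<in> H (nset a)" "z \<in> H (nset b)" "bij_betw \<tau> (nset b) (nset b)"
    then show "(if u (y, rl \<tau> (nset b) z) = c then 1 else 0) = (if u (y, z) = c then 1 else 0)"
      using inv[of "(y, z)" id \<tau>] rl_id[OF finite_nset] by simp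
  qed
qed

end

section \<open>Coproduct components and primitive elements\<close>

locale comonoid_species = species +
  fixes D :: "nat set \<Rightarrow> nat set \<Rightarrow> 'a \<Rightarrow> 'a \<times> 'a"
  assumes comonoid: "poset_comonoid H le rl D"
begin

lemma D_in:
  "finite S \<Longrightarrow> finite T \<Longrightarrow> S \<inter> T = {} \<Longrightarrow> x \<in> H (S \<union> T) \<Longrightarrow> D S T x \<in> H S \<times> H T"
  using comonoid[unfolded poset_comonoid_def, THEN conjunct1] by (simp add: mem_Times_iff)

lemma D_rl:
  "finite S \<Longrightarrow> finite T \<Longrightarrow> S \<inter> T = {} \<Longrightarrow> x \<in> H (S \<union> T) \<Longrightarrow> inj_on \<sigma> (S \<union> T) \<Longrightarrow>
    D (\<sigma> ` S) (\<sigma> ` T) (rl \<sigma> (S \<union> T) x) = map_prod (rl \<sigma> S) (rl \<sigma> T) (D S T x)"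
  using comonoid[unfolded poset_comonoid_def, THEN conjunct2, THEN conjunct2, THEN conjunct1]
  by (simp add: map_prod_def split_beta)

definition coprod_std :: "nat \<Rightarrow> nat set \<Rightarrow> 'a \<Rightarrow> 'a \<times> 'a" where
  "coprod_std n S = map_prod (rl (std S) S) (rl (std (nset n - S)) (nset n - S)) \<circ> D S (nset n - S)"

lemma fock_comp_eq_sum: "fock_comp rl D n a v = (\<Sum>S\<in>nsubsets n a. push (coprod_std n S) v)"
  by (simp add: fock_comp_def fun_eq_iff sum_fun_apply nsubsets_def coprod_std_def map_prod_def
      split_beta comp_def)

lemma coprod_std_in:
  assumes "S \<subseteq> nset n" "x \<in> H (nset n)"
  shows "coprod_std n S x \<in> H (nset (card S)) \<times> H (nset (n - card S))"
proof -
  let ?T = "nset n - S"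
  have fin: "finite S" "finite ?T" using assms(1) by (auto intro: finite_subset)
  have T: "card ?T = n - card S" using assms(1) fin by (simp add: card_Diff_subset)
  have "D S ?T x \<in> H S \<times> H ?T" using D_in fin assms Un_absorb1[OF assms(1)] by auto
  then have "rl (std S) S (fst (D S ?T x)) \<in> H (nset (card S))"
    and "rl (std ?T) ?T (snd (D S ?T x)) \<in> H (nset (card ?T))"
    using rl_in_bij[OF _ bij_betw_std] fin by (auto simp: mem_Times_iff)
  then show ?thesis unfolding coprod_std_def T by (simp add: mem_Times_iff)
qed

lemma coprod_std_rl:
  assumes \<sigma>: "bij_betw \<sigma> (nset n) (nset n)" and S: "S \<subseteq> nset n" and x: "x \<in> H (nset n)"
    and \<alpha>: "bij_betw \<alpha> (nset (card S)) (nset (card S))"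
    and \<beta>: "bij_betw \<beta> (nset (n - card S)) (nset (n - card S))"
    and std_S: "\<forall>i\<in>S. std (\<sigma> ` S) (\<sigma> i) = \<alpha> (std S i)"
    and std_T: "\<forall>i\<in>nset n - S. std (nset n - \<sigma> ` S) (\<sigma> i) = \<beta> (std (nset n - S) i)"
  shows "coprod_std n (\<sigma> ` S) (rl \<sigma> (nset n) x) =
    map_prod (rl \<alpha> (nset (card S))) (rl \<beta> (nset (n - card S))) (coprod_std n S x)"
proof -
  let ?N = "nset n" and ?T = "nset n - S"
  have fin: "finite S" "finite ?T" using S by (auto intro: finite_subset)
  have cT: "card ?T = n - card S" using S fin by (simp add: card_Diff_subset)
  have N: "S \<union> ?T = ?N" using S by auto
  have inj: "inj_on \<sigma> (S \<union> ?T)" using \<sigma> N by (simp add: bij_betw_def)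
  have T': "?N - \<sigma> ` S = \<sigma> ` ?T"
    using \<sigma> S inj_on_image_set_diff[of \<sigma> ?N ?N S] by (simp add: bij_betw_def)
  have xST: "x \<in> H (S \<union> ?T)" using x N by simp
  obtain y z where yz: "D S ?T x = (y, z)" "y \<in> H S" "z \<in> H ?T" using D_in[OF fin _ xST] by auto
  have "D (\<sigma> ` S) (\<sigma> ` ?T) (rl \<sigma> ?N x) = map_prod (rl \<sigma> S) (rl \<sigma> ?T) (D S ?T x)"
    using D_rl[OF fin _ xST inj] N by auto
  moreover have "rl (std (\<sigma> ` S)) (\<sigma> ` S) (rl \<sigma> S y) = rl \<alpha> (nset (card S)) (rl (std S) S y)"
    if "y \<in> H S" for y :: 'a
    using rl_std_conj[OF fin(1) that _ \<alpha> std_S] inj by (auto intro: inj_on_subset)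
  moreover have "rl (std (\<sigma> ` ?T)) (\<sigma> ` ?T) (rl \<sigma> ?T z) = rl \<beta> (nset (n - card S)) (rl (std ?T) ?T z)"
    if "z \<in> H ?T" for z
    using rl_std_conj[OF fin(2) that, of \<sigma> \<beta>] \<beta> cT inj std_T T' by (auto intro: inj_on_subset)
  ultimately show ?thesis using yz T' unfolding coprod_std_def by simp
qed

lemma coprod_std_rl_exists:
  assumes \<sigma>: "bij_betw \<sigma> (nset n) (nset n)" and S: "S \<subseteq> nset n" and x: "x \<in> H (nset n)"
  obtains \<alpha> \<beta> where "bij_betw \<alpha> (nset (card S)) (nset (card S))"
    "bij_betw \<beta> (nset (n - card S)) (nset (n - card S))"
    "coprod_std n (\<sigma> ` S) (rl \<sigma> (nset n) x) =
      map_prod (rl \<alpha> (nset (card S))) (rl \<beta> (nset (n - card S))) (coprod_std n S x)"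
proof -
  let ?N = "nset n" and ?T = "nset n - S"
  define \<alpha> where "\<alpha> = std (\<sigma> ` S) \<circ> \<sigma> \<circ> the_inv_into S (std S)"
  define \<beta> where "\<beta> = std (\<sigma> ` ?T) \<circ> \<sigma> \<circ> the_inv_into ?T (std ?T)"
  have fin: "finite S" "finite ?T" using S by (auto intro: finite_subset)
  have cT: "card ?T = n - card S" using S fin by (simp add: card_Diff_subset)
  have T': "?N - \<sigma> ` S = \<sigma> ` ?T"
    using \<sigma> S inj_on_image_set_diff[of \<sigma> ?N ?N S] by (simp add: bij_betw_def)
  have "bij_betw \<sigma> S (\<sigma> ` S)" "bij_betw \<sigma> ?T (\<sigma> ` ?T)"
    using bij_betw_subset[OF \<sigma>] S by auto
  then have \<alpha>_bij: "bij_betw \<alpha> (nset (card S)) (nset (card S))"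
    and \<beta>_bij: "bij_betw \<beta> (nset (n - card S)) (nset (n - card S))"
    unfolding \<alpha>_def \<beta>_def using bij_betw_std_conj fin cT by metis+
  have "\<forall>i\<in>S. std (\<sigma> ` S) (\<sigma> i) = \<alpha> (std S i)"
    unfolding \<alpha>_def using the_inv_into_f_f[OF inj_on_std[OF fin(1)]] by simp
  moreover have "\<forall>i\<in>?T. std (?N - \<sigma> ` S) (\<sigma> i) = \<beta> (std ?T i)"
    unfolding \<beta>_def T' using the_inv_into_f_f[OF inj_on_std[OF fin(2)]] by simp
  ultimately show thesis using that[OF \<alpha>_bij \<beta>_bij] coprod_std_rl[OF \<sigma> S x \<alpha>_bij \<beta>_bij] by blast
qed

lemma coprod_std_transport:
  assumes S: "S \<in> nsubsets n a" and S': "S' \<in> nsubsets n a"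
    and \<alpha>: "bij_betw \<alpha> (nset a) (nset a)" and \<beta>: "bij_betw \<beta> (nset (n - a)) (nset (n - a))"
  obtains \<pi> where "\<pi> permutes nset n"
    "\<And>x. x \<in> H (nset n) \<Longrightarrow>
      coprod_std n S (rl \<pi> (nset n) x) = map_prod (rl \<alpha> (nset a)) (rl \<beta> (nset (n - a))) (coprod_std n S' x)"
proof -
  let ?N = "nset n" and ?T = "nset n - S" and ?T' = "nset n - S'"
  have sub: "S \<subseteq> ?N" "S' \<subseteq> ?N" and card: "card S = a" "card S' = a"
    using S S' by (auto simp: nsubsets_def)
  have fin: "finite S" "finite S'" "finite ?T" "finite ?T'" using sub by (auto intro: finite_subset)
  have cT: "card ?T = n - a" "card ?T' = n - a" using sub fin card by (simp_all add: card_Diff_subset)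
  define \<phi> where "\<phi> = the_inv_into S (std S) \<circ> \<alpha> \<circ> std S'"
  define \<psi> where "\<psi> = the_inv_into ?T (std ?T) \<circ> \<beta> \<circ> std ?T'"
  have \<phi>: "bij_betw \<phi> S' S" unfolding \<phi>_def
    using bij_betw_std[OF fin(2)] \<alpha> bij_betw_the_inv_into[OF bij_betw_std[OF fin(1)]] card
    by (auto intro: bij_betw_trans)
  have \<psi>: "bij_betw \<psi> ?T' ?T" unfolding \<psi>_def
    using bij_betw_std[OF fin(4)] \<beta> bij_betw_the_inv_into[OF bij_betw_std[OF fin(3)]] cT
    by (auto intro: bij_betw_trans)
  define \<pi> where "\<pi> = (\<lambda>i. if i \<in> S' then \<phi> i else if i \<in> ?T' then \<psi> i else i)"
  have \<pi>: "\<pi> permutes ?N" unfolding \<pi>_def by (rule permutes_glue[OF _ _ _ _ \<phi> \<psi>]) (use sub in auto)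
  have \<pi>_S': "\<pi> ` S' = S" using \<phi> by (auto simp: \<pi>_def bij_betw_def)
  have "std S (\<pi> i) = \<alpha> (std S' i)" if "i \<in> S'" for i
    using that std_the_inv_into[OF fin(1)] std_in_nset[OF fin(2) that] \<alpha> card
    by (auto simp: \<pi>_def \<phi>_def bij_betw_def)
  moreover have "std ?T (\<pi> i) = \<beta> (std ?T' i)" if "i \<in> ?T'" for i
    using that std_the_inv_into[OF fin(3)] std_in_nset[OF fin(4) that] \<beta> cT
    by (auto simp: \<pi>_def \<psi>_def bij_betw_def)
  ultimately have "coprod_std n S (rl \<pi> ?N x) =
      map_prod (rl \<alpha> (nset a)) (rl \<beta> (nset (n - a))) (coprod_std n S' x)" if "x \<in> H ?N" for x
    using coprod_std_rl[OF permutes_imp_bij[OF \<pi>] sub(2) that] \<alpha> \<beta> \<pi>_S' card by simp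
  with \<pi> show thesis by (rule that)
qed

lemma fock_comp_add:
  "finite (supp v) \<Longrightarrow> finite (supp w) \<Longrightarrow>
    fock_comp rl D n a (v + w :: _ \<Rightarrow> 'k::field) = fock_comp rl D n a v + fock_comp rl D n a w"
  unfolding fock_comp_eq_sum by (simp add: push_add sum.distrib)

lemma fock_comp_smult:
  "fock_comp rl D n a (\<lambda>z. c * v z :: 'k::field) = (\<lambda>y. c * fock_comp rl D n a v y)"
  unfolding fock_comp_eq_sum by (simp add: push_smult fun_eq_iff sum_fun_apply sum_distrib_left)

lemma fock_comp_diff:
  "finite (supp v) \<Longrightarrow> finite (supp w) \<Longrightarrow>
    fock_comp rl D n a (v - w :: _ \<Rightarrow> 'k::field) = fock_comp rl D n a v - fock_comp rl D n a w"
  unfolding fock_comp_eq_sum by (simp add: push_diff sum_subtractf)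

lemma bij_betw_image_nsubsets:
  assumes "bij_betw \<sigma> (nset n) (nset n)"
  shows "bij_betw (image \<sigma>) (nsubsets n a) (nsubsets n a)"
proof -
  have "bij_betw (image \<sigma>) (Pow (nset n)) (Pow (nset n))" using assms by (rule bij_betw_Pow)
  then have inj: "inj_on (image \<sigma>) (nsubsets n a)"
    unfolding nsubsets_def bij_betw_def by (auto intro: inj_on_subset)
  have "image \<sigma> ` nsubsets n a \<subseteq> nsubsets n a"
  proof (rule image_subsetI)
    fix S assume "S \<in> nsubsets n a"
    then have S: "S \<subseteq> nset n" "card S = a" by (auto simp: nsubsets_def)
    then have "inj_on \<sigma> S" using assms bij_betw_imp_inj_on inj_on_subset by blast
    moreover have "\<sigma> ` S \<subseteq> nset n" using assms S by (auto simp: bij_betw_def)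
    ultimately show "\<sigma> ` S \<in> nsubsets n a" using S by (simp add: nsubsets_def card_image)
  qed
  moreover have "card (image \<sigma> ` nsubsets n a) = card (nsubsets n a)" using inj card_image by blast
  ultimately show ?thesis using inj finite_nsubsets card_subset_eq by (metis bij_betw_def)
qed

lemma fock_comp_coinv_ker_generator:
  assumes x: "x \<in> H (nset n)" and \<sigma>: "bij_betw \<sigma> (nset n) (nset n)"
  shows "fock_comp rl D n a (delta x - delta (rl \<sigma> (nset n) x) :: _ \<Rightarrow> 'k::field) \<in> tensor_ker H rl a (n - a)"
proof -
  have "(\<Sum>S\<in>nsubsets n a. delta (coprod_std n (\<sigma> ` S) (rl \<sigma> (nset n) x)) :: _ \<Rightarrow> 'k) =
      (\<Sum>S\<in>nsubsets n a. delta (coprod_std n S (rl \<sigma> (nset n) x)))"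
    by (rule sum.reindex_bij_betw[OF bij_betw_image_nsubsets[OF \<sigma>]])
  then have "fock_comp rl D n a (delta x - delta (rl \<sigma> (nset n) x) :: _ \<Rightarrow> 'k) =
      (\<Sum>S\<in>nsubsets n a. delta (coprod_std n S x) - delta (coprod_std n (\<sigma> ` S) (rl \<sigma> (nset n) x)))"
    unfolding fock_comp_eq_sum by (simp add: push_diff push_delta sum_subtractf)
  also have "\<dots> \<in> tensor_ker H rl a (n - a)"
    unfolding tensor_ker_def
  proof (rule lspan_sum[OF finite_nsubsets], fold tensor_ker_def)
    fix S assume "S \<in> nsubsets n a"
    then have S: "S \<subseteq> nset n" "card S = a" by (auto simp: nsubsets_def)
    obtain \<alpha> \<beta> where "bij_betw \<alpha> (nset a) (nset a)" "bij_betw \<beta> (nset (n - a)) (nset (n - a))"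
      "coprod_std n (\<sigma> ` S) (rl \<sigma> (nset n) x) =
        map_prod (rl \<alpha> (nset a)) (rl \<beta> (nset (n - a))) (coprod_std n S x)"
      using coprod_std_rl_exists[OF \<sigma> S(1) x] S(2) by metis
    then show "delta (coprod_std n S x) - delta (coprod_std n (\<sigma> ` S) (rl \<sigma> (nset n) x))
        \<in> tensor_ker H rl a (n - a)"
      using tensor_ker_map_prod_rl[OF coprod_std_in[OF S(1) x]] S(2) by simp
  qed
  finally show ?thesis .
qed

lemma fock_comp_coinv_ker:
  assumes "w \<in> coinv_ker H rl n"
  shows "fock_comp rl D n a (w :: _ \<Rightarrow> 'k::field) \<in> tensor_ker H rl a (n - a)"
  using assms unfolding coinv_ker_def tensor_ker_def
proof (rule lspan_linear_image, fold tensor_ker_def)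
  fix g :: "'a \<Rightarrow> 'k"
  assume "g \<in> {delta x - delta (rl \<sigma> (nset n) x) | x \<sigma>. x \<in> H (nset n) \<and> bij_betw \<sigma> (nset n) (nset n)}"
  then show "finite (supp g)" "fock_comp rl D n a g \<in> tensor_ker H rl a (n - a)"
    using fock_comp_coinv_ker_generator by auto
qed (simp_all only: fock_comp_add fock_comp_smult)

lemma perm_invariant_transport:
  assumes p: "lin (H (nset n)) p" "perm_invariant n p"
    and S: "S \<in> nsubsets n a" "S' \<in> nsubsets n a"
    and \<alpha>: "bij_betw \<alpha> (nset a) (nset a)" and \<beta>: "bij_betw \<beta> (nset (n - a)) (nset (n - a))"
  shows "push (map_prod (rl \<alpha> (nset a)) (rl \<beta> (nset (n - a)))) (push (coprod_std n S') p)
    = push (coprod_std n S) (p :: _ \<Rightarrow> 'k::comm_monoid_add)"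
proof -
  have fin: "finite (supp p)" and sub: "supp p \<subseteq> H (nset n)" using p(1) by (auto simp: lin_def)
  obtain \<pi> where \<pi>: "\<pi> permutes nset n" and tr: "\<And>x. x \<in> H (nset n) \<Longrightarrow>
      coprod_std n S (rl \<pi> (nset n) x) = map_prod (rl \<alpha> (nset a)) (rl \<beta> (nset (n - a))) (coprod_std n S' x)"
    by (rule coprod_std_transport[OF S \<alpha> \<beta>]) blast
  have "push (map_prod (rl \<alpha> (nset a)) (rl \<beta> (nset (n - a)))) (push (coprod_std n S') p)
      = push (coprod_std n S \<circ> rl \<pi> (nset n)) p"
    unfolding push_comp[OF fin] by (rule push_cong) (use tr sub in auto)
  also have "\<dots> = push (coprod_std n S) (push (rl \<pi> (nset n)) p)" by (rule push_comp[OF fin, symmetric])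
  also have "\<dots> = push (coprod_std n S) p" using p(2) \<pi> by (simp add: perm_invariant_def)
  finally show ?thesis .
qed

lemma supp_push_coprod_std:
  assumes "lin (H (nset n)) p" "S \<in> nsubsets n a"
  shows "supp (push (coprod_std n S) p) \<subseteq> H (nset a) \<times> H (nset (n - a))"
proof -
  have "supp (push (coprod_std n S) p) \<subseteq> coprod_std n S ` supp p" by (rule supp_push)
  also have "\<dots> \<subseteq> H (nset a) \<times> H (nset (n - a))"
    using coprod_std_in assms unfolding nsubsets_def lin_def by blast
  finally show ?thesis .
qed

lemma perm_invariant_fock_comp:
  assumes p: "lin (H (nset n)) p" "perm_invariant n p" and S: "S \<in> nsubsets n a"
  shows "fock_comp rl D n a p = (\<lambda>w. of_nat (n choose a) * push (coprod_std n S) p w)"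
proof -
  have "push (coprod_std n S') p = push (coprod_std n S) p" if S': "S' \<in> nsubsets n a" for S'
  proof -
    have "push (map_prod (rl id (nset a)) (rl id (nset (n - a)))) (push (coprod_std n S') p)
        = push id (push (coprod_std n S') p)"
      by (rule push_cong) (use supp_push_coprod_std[OF p(1) S'] rl_id in auto)
    then show ?thesis using perm_invariant_transport[OF p S S' bij_betw_id bij_betw_id] by (simp add: push_id)
  qed
  then show ?thesis
    by (simp add: fock_comp_eq_sum fun_eq_iff sum_fun_apply card_nsubsets)
qed

lemma supp_push_D:
  assumes "lin (H (S \<union> T)) p" "finite S" "finite T" "S \<inter> T = {}"
  shows "supp (push (D S T) p) \<subseteq> H S \<times> H T"
proof -
  have "supp (push (D S T) p) \<subseteq> D S T ` supp p" by (rule supp_push)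
  also have "\<dots> \<subseteq> H S \<times> H T" using D_in assms unfolding lin_def by blast
  finally show ?thesis .
qed

lemma push_coprod_std:
  assumes "lin (H (nset n)) p" "S \<subseteq> nset n"
  shows "push (coprod_std n S) p =
    push (map_prod (rl (std S) S) (rl (std (nset n - S)) (nset n - S))) (push (D S (nset n - S)) p)"
  using assms unfolding coprod_std_def lin_def by (simp add: push_comp)

lemma perm_invariant_fock_primitive_imp_lin_primitive:
  fixes p :: "'a \<Rightarrow> 'k::field_char_0"
  assumes p: "lin (H (nset n)) p" "perm_invariant n p" and fp: "fock_primitive H rl D n p"
  shows "lin_primitive D (nset n) p"
  unfolding lin_primitive_def
proof (intro allI impI)
  fix S T assume ST: "S \<union> T = nset n \<and> S \<inter> T = {} \<and> S \<noteq> {} \<and> T \<noteq> {}"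
  let ?a = "card S" and ?B = "H (nset (card S)) \<times> H (nset (n - card S))"
  have S: "S \<in> nsubsets n ?a" and T: "T = nset n - S" using ST by (auto simp: nsubsets_def)
  have fin: "finite S" "finite T" using ST by (metis finite_Un finite_nset)+
  have "S \<subseteq> nset n" using ST by blast
  then have "card T = n - ?a" unfolding T using fin by (simp add: card_Diff_subset)
  then have a: "0 < ?a" "?a < n" using ST fin by (auto simp: card_gt_0_iff)
  \<comment> \<open>all components on \<open>a\<close>-subsets equal \<open>u\<close>, so primitivity puts \<open>u\<close> itself into the kernel\<close>
  define u where "u = push (coprod_std n S) p"
  have "u = (\<lambda>w. inverse (of_nat (n choose ?a)) * fock_comp rl D n ?a p w)"
    using perm_invariant_fock_comp[OF p S] a by (simp add: u_def fun_eq_iff)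
  moreover have "fock_comp rl D n ?a p \<in> tensor_ker H rl ?a (n - ?a)"
    using fp a unfolding fock_primitive_def by blast
  ultimately have "u \<in> tensor_ker H rl ?a (n - ?a)" unfolding tensor_ker_def by (simp add: lspan.smult)
  moreover have "u (map_prod (rl \<sigma> (nset ?a)) (rl \<tau> (nset (n - ?a))) w) = u w"
    if "w \<in> ?B" "bij_betw \<sigma> (nset ?a) (nset ?a)" "bij_betw \<tau> (nset (n - ?a)) (nset (n - ?a))"
    for w \<sigma> \<tau>
  proof -
    have "inj_on (map_prod (rl \<sigma> (nset ?a)) (rl \<tau> (nset (n - ?a)))) ?B"
      using that(2,3) by (intro map_prod_inj_on bij_betw_imp_inj_on[OF bij_betw_rl]) auto
    then have "push (map_prod (rl \<sigma> (nset ?a)) (rl \<tau> (nset (n - ?a)))) u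
        (map_prod (rl \<sigma> (nset ?a)) (rl \<tau> (nset (n - ?a))) w) = u w"
      unfolding u_def by (rule push_at_image[OF _ supp_push_coprod_std[OF p(1) S] that(1)])
    then show ?thesis using perm_invariant_transport[OF p S S that(2,3)] unfolding u_def by simp
  qed
  ultimately have u0: "u = 0" by (rule tensor_ker_invariant_eq_zero)
  have "inj_on (map_prod (rl (std S) S) (rl (std T) T)) (H S \<times> H T)"
    using fin by (intro map_prod_inj_on bij_betw_imp_inj_on[OF bij_betw_rl[OF _ bij_betw_std]])
  moreover have "supp (push (D S T) p) \<subseteq> H S \<times> H T"
    using p(1) ST fin by (intro supp_push_D) auto
  moreover have "push (map_prod (rl (std S) S) (rl (std T) T)) (push (D S T) p) = 0"
    using push_coprod_std[OF p(1) \<open>S \<subseteq> nset n\<close>] u0 unfolding u_def T by simp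
  ultimately show "push (D S T) p = 0" by (rule push_eq_zero_imp_eq_zero)
qed

lemma lin_primitive_fock_comp_eq_zero:
  assumes p: "lin (H (nset n)) p" "lin_primitive D (nset n) p" and a: "0 < a" "a < n"
  shows "fock_comp rl D n a p = 0"
proof -
  have "push (coprod_std n S) p = 0" if "S \<in> nsubsets n a" for S
  proof -
    have S: "S \<subseteq> nset n" "card S = a" using that by (auto simp: nsubsets_def)
    have "finite S" using S(1) by (auto intro: finite_subset)
    then have "card (nset n - S) = n - a" using S by (simp add: card_Diff_subset)
    then have "S \<union> (nset n - S) = nset n \<and> S \<inter> (nset n - S) = {} \<and> S \<noteq> {} \<and> nset n - S \<noteq> {}"
      using S a by auto
    then have "push (D S (nset n - S)) p = 0" by (rule p(2)[unfolded lin_primitive_def, rule_format])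
    then show ?thesis using push_coprod_std[OF p(1) S(1)] by simp
  qed
  then show ?thesis by (simp add: fock_comp_eq_sum)
qed

lemma fock_primitive_coinv_ker_cong:
  assumes "lin (H (nset n)) v" "lin (H (nset n)) p" "v - p \<in> coinv_ker H rl n"
  shows "fock_primitive H rl D n v \<longleftrightarrow> fock_primitive H rl D n (p :: _ \<Rightarrow> 'k::field)"
proof -
  have "fock_comp rl D n a v \<in> tensor_ker H rl a (n - a) \<longleftrightarrow> fock_comp rl D n a p \<in> tensor_ker H rl a (n - a)"
    for a
  proof -
    have diff: "fock_comp rl D n a (v - p) = fock_comp rl D n a v - fock_comp rl D n a p"
      using assms(1,2) by (intro fock_comp_diff) (auto simp: lin_def)
    have ker: "fock_comp rl D n a (v - p) \<in> tensor_ker H rl a (n - a)"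
      by (rule fock_comp_coinv_ker[OF assms(3)])
    show ?thesis
    proof
      assume "fock_comp rl D n a v \<in> tensor_ker H rl a (n - a)"
      then have "fock_comp rl D n a v - fock_comp rl D n a (v - p) \<in> tensor_ker H rl a (n - a)"
        using ker unfolding tensor_ker_def by (rule lspan_diff)
      then show "fock_comp rl D n a p \<in> tensor_ker H rl a (n - a)" by (simp add: diff)
    next
      assume "fock_comp rl D n a p \<in> tensor_ker H rl a (n - a)"
      then have "fock_comp rl D n a p + fock_comp rl D n a (v - p) \<in> tensor_ker H rl a (n - a)"
        using ker unfolding tensor_ker_def by (rule lspan.add)
      then show "fock_comp rl D n a v \<in> tensor_ker H rl a (n - a)" by (simp add: diff)
    qed
  qed
  then show ?thesis unfolding fock_primitive_def by simp
qed

theorem fock_primitive_iff: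
  fixes v :: "'a \<Rightarrow> 'k::field_char_0"
  assumes v: "lin (H (nset n)) v"
  shows "fock_primitive H rl D n v \<longleftrightarrow>
    (\<exists>p. lin (H (nset n)) p \<and> lin_primitive D (nset n) p \<and> v - p \<in> coinv_ker H rl n)"
proof
  assume "fock_primitive H rl D n v"
  let ?p = "symmetrize n v"
  have p: "lin (H (nset n)) ?p" "perm_invariant n ?p" "v - ?p \<in> coinv_ker H rl n"
    using lin_symmetrize perm_invariant_symmetrize diff_symmetrize_in_coinv_ker v by blast+
  then have "fock_primitive H rl D n ?p"
    using fock_primitive_coinv_ker_cong[OF v] \<open>fock_primitive H rl D n v\<close> by blast
  then show "\<exists>p. lin (H (nset n)) p \<and> lin_primitive D (nset n) p \<and> v - p \<in> coinv_ker H rl n"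
    using perm_invariant_fock_primitive_imp_lin_primitive p by blast
next
  assume "\<exists>p. lin (H (nset n)) p \<and> lin_primitive D (nset n) p \<and> v - p \<in> coinv_ker H rl n"
  then obtain p where p: "lin (H (nset n)) p" "lin_primitive D (nset n) p" "v - p \<in> coinv_ker H rl n"
    by blast
  have "fock_primitive H rl D n p"
    unfolding fock_primitive_def tensor_ker_def
    using lin_primitive_fock_comp_eq_zero[OF p(1,2)] by (simp add: lspan.zero)
  then show "fock_primitive H rl D n v" using fock_primitive_coinv_ker_cong[OF v p(1,3)] by blast
qed

end

section \<open>The Moebius basis\<close>

context species
begin

definition upset :: "nat \<Rightarrow> 'a \<Rightarrow> 'a set" where
  "upset n x = {y \<in> H (nset n). le (nset n) x y}"

lemma omega_eq_mobius: "omega H le n x = (mobius (H (nset n)) (le (nset n)) x :: 'a \<Rightarrow> 'k::comm_ring_1)"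
proof -
  interpret locally_finite_poset "H (nset n)" "le (nset n)" by (rule locally_finite_poset_H) simp
  show ?thesis unfolding omega_def by (auto simp: fun_eq_iff mobius_eq_zero)
qed

lemma supp_omega: "supp (omega H le n x) \<subseteq> upset n x"
  by (auto simp: supp_def omega_def upset_def)

lemma lin_omega: "finite (upset n x) \<Longrightarrow> lin (H (nset n)) (omega H le n x)"
  using supp_omega unfolding lin_def upset_def by (blast intro: finite_subset)

lemma omega_rl:
  assumes \<sigma>: "bij_betw \<sigma> (nset n) (nset n)" and x: "x \<in> H (nset n)"
  shows "omega H le n (rl \<sigma> (nset n) x) = push (rl \<sigma> (nset n)) (omega H le n x :: 'a \<Rightarrow> 'k::comm_ring_1)"
proof
  let ?N = "nset n" and ?h = "rl \<sigma> (nset n)"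
  interpret locally_finite_poset "H ?N" "le ?N" by (rule locally_finite_poset_H) simp
  have h: "bij_betw ?h (H ?N) (H ?N)" by (rule bij_betw_rl[OF finite_nset \<sigma>])
  have le_h: "\<And>a b. a \<in> H ?N \<Longrightarrow> b \<in> H ?N \<Longrightarrow> le ?N (?h a) (?h b) \<longleftrightarrow> le ?N a b"
    by (rule rl_le_iff[OF finite_nset \<sigma>])
  have supp_H: "supp (omega H le n x :: 'a \<Rightarrow> 'k) \<subseteq> H ?N" using supp_omega by (auto simp: upset_def)
  fix y
  show "(omega H le n (?h x) :: 'a \<Rightarrow> 'k) y = push ?h (omega H le n x) y"
  proof (cases "y \<in> H ?N")
    case True
    then obtain y' where y': "y' \<in> H ?N" "y = ?h y'" using h by (auto simp: bij_betw_def)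
    have "push ?h (omega H le n x :: 'a \<Rightarrow> 'k) (?h y') = omega H le n x y'"
      by (rule push_at_image[OF bij_betw_imp_inj_on[OF h] supp_H y'(1)])
    moreover have "(mobius (H ?N) (le ?N) (?h x) (?h y') :: 'k) = mobius (H ?N) (le ?N) x y'"
      by (rule mobius_automorphism[OF h le_h x y'(1)])
    ultimately show ?thesis using y' by (simp add: omega_eq_mobius)
  next
    case False
    have "supp (push ?h (omega H le n x :: 'a \<Rightarrow> 'k)) \<subseteq> H ?N"
      using supp_push[of ?h "omega H le n x :: 'a \<Rightarrow> 'k"] supp_H h by (auto simp: bij_betw_def)
    then show ?thesis using False by (auto simp: omega_def supp_def)
  qed
qed

definition orbit :: "nat \<Rightarrow> 'a \<Rightarrow> 'a set" where
  "orbit n x = {rl \<sigma> (nset n) x | \<sigma>. bij_betw \<sigma> (nset n) (nset n)}"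

lemma mem_orbit_self: "x \<in> H (nset n) \<Longrightarrow> x \<in> orbit n x"
  unfolding orbit_def using rl_id[OF finite_nset] bij_betw_id by (metis (mono_tags, lifting) mem_Collect_eq)

lemma rl_mem_orbit_iff:
  assumes x0: "x0 \<in> H (nset n)" and x: "x \<in> H (nset n)" and \<sigma>: "bij_betw \<sigma> (nset n) (nset n)"
  shows "rl \<sigma> (nset n) x \<in> orbit n x0 \<longleftrightarrow> x \<in> orbit n x0"
proof
  assume "x \<in> orbit n x0"
  then obtain \<tau> where \<tau>: "bij_betw \<tau> (nset n) (nset n)" "x = rl \<tau> (nset n) x0" by (auto simp: orbit_def)
  then have "rl \<sigma> (nset n) x = rl (\<sigma> \<circ> \<tau>) (nset n) x0" using rl_comp_bij[OF finite_nset _ \<sigma> x0] by simp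
  then show "rl \<sigma> (nset n) x \<in> orbit n x0" using bij_betw_trans[OF \<tau>(1) \<sigma>] by (auto simp: orbit_def)
next
  let ?s = "the_inv_into (nset n) \<sigma>"
  assume "rl \<sigma> (nset n) x \<in> orbit n x0"
  then obtain \<tau> where \<tau>: "bij_betw \<tau> (nset n) (nset n)" "rl \<sigma> (nset n) x = rl \<tau> (nset n) x0"
    by (auto simp: orbit_def)
  have s: "bij_betw ?s (nset n) (nset n)" using bij_betw_the_inv_into[OF \<sigma>] .
  have "x = rl ?s (nset n) (rl \<tau> (nset n) x0)" using rl_the_inv_into[OF finite_nset \<sigma> x] \<tau>(2) by simp
  also have "\<dots> = rl (?s \<circ> \<tau>) (nset n) x0" using rl_comp_bij[OF finite_nset \<tau>(1) s x0] .
  finally show "x \<in> orbit n x0" using bij_betw_trans[OF \<tau>(1) s] by (auto simp: orbit_def)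
qed

lemma upset_rl:
  assumes \<sigma>: "bij_betw \<sigma> (nset n) (nset n)" and x: "x \<in> H (nset n)"
  shows "card (upset n (rl \<sigma> (nset n) x)) = card (upset n x)"
proof -
  let ?h = "rl \<sigma> (nset n)"
  have h: "bij_betw ?h (H (nset n)) (H (nset n))" by (rule bij_betw_rl[OF finite_nset \<sigma>])
  have "upset n (?h x) = ?h ` upset n x"
  proof
    show "?h ` upset n x \<subseteq> upset n (?h x)"
      using h rl_le_iff[OF finite_nset \<sigma> x] unfolding upset_def bij_betw_def by auto
    show "upset n (?h x) \<subseteq> ?h ` upset n x"
    proof
      fix y assume y: "y \<in> upset n (?h x)"
      then obtain y' where "y' \<in> H (nset n)" "y = ?h y'" using h by (auto simp: upset_def bij_betw_def)
      then show "y \<in> ?h ` upset n x" using y rl_le_iff[OF finite_nset \<sigma> x] by (auto simp: upset_def)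
    qed
  qed
  moreover have "inj_on ?h (upset n x)" using h by (auto simp: bij_betw_def upset_def intro: inj_on_subset)
  ultimately show ?thesis by (simp add: card_image)
qed

lemma upset_card_le_imp_eq:
  assumes "z \<in> H (nset n)" "y \<in> H (nset n)" "le (nset n) z y"
    and "finite (upset n z)" "card (upset n z) \<le> card (upset n y)"
  shows "z = y"
proof -
  have "upset n y \<subseteq> upset n z" using le_trans_H[OF finite_nset assms(1,2)] assms(3) by (auto simp: upset_def)
  then have "upset n y = upset n z" using card_subset_eq[OF assms(4)] card_mono[OF assms(4)] assms(5)
    by (metis le_antisym)
  then have "le (nset n) y z" using assms(1) le_refl_H[OF finite_nset] by (auto simp: upset_def)
  then show ?thesis using le_antisym_H[OF finite_nset assms(1,2,3)] by simp
qed

lemma pairing_orbit_omega: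
  assumes x0: "x0 \<in> H (nset n)" and z: "z \<in> H (nset n)" "finite (upset n z)"
    and card: "card (upset n z) \<le> card (upset n x0)"
  shows "pairing (\<lambda>y. if y \<in> orbit n x0 then 1 else 0) (omega H le n z :: 'a \<Rightarrow> 'k::comm_ring_1) =
    (if z \<in> orbit n x0 then 1 else 0)"
proof -
  interpret locally_finite_poset "H (nset n)" "le (nset n)" by (rule locally_finite_poset_H) simp
  let ?\<omega> = "omega H le n z :: 'a \<Rightarrow> 'k"
  have \<omega>_z: "?\<omega> z = 1" using z le_refl_H[OF finite_nset] by (simp add: omega_def mobius_refl)
  have "y = z" if y: "y \<in> supp ?\<omega>" "y \<in> orbit n x0" for y
  proof -
    obtain \<sigma> where \<sigma>: "bij_betw \<sigma> (nset n) (nset n)" "y = rl \<sigma> (nset n) x0"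
      using y(2) by (auto simp: orbit_def)
    have "y \<in> H (nset n)" "le (nset n) z y" using y(1) supp_omega by (auto simp: upset_def)
    moreover have "card (upset n z) \<le> card (upset n y)" using card upset_rl[OF \<sigma>(1) x0] \<sigma>(2) by simp
    ultimately show ?thesis using upset_card_le_imp_eq[OF z(1) _ _ z(2)] by (metis)
  qed
  then have orbit_\<omega>: "supp ?\<omega> \<inter> orbit n x0 = (if z \<in> orbit n x0 then {z} else {})"
    using \<omega>_z by (auto simp: supp_def)
  have "lin (H (nset n)) ?\<omega>" by (rule lin_omega[OF z(2)])
  then have "finite (supp ?\<omega>)" by (simp add: lin_def)
  then have "pairing (\<lambda>y. if y \<in> orbit n x0 then 1 else 0) ?\<omega> = (\<Sum>y\<in>supp ?\<omega> \<inter> orbit n x0. ?\<omega> y)"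
    unfolding pairing_def by (subst sum.inter_restrict) (auto intro: sum.cong)
  then show ?thesis unfolding orbit_\<omega> by (simp add: \<omega>_z)
qed

lemma omega_orbit_coinv_ker:
  assumes "x \<in> H (nset n)" "finite (upset n x)" "y \<in> orbit n x"
  shows "omega H le n x - omega H le n y \<in> (coinv_ker H rl n :: ('a \<Rightarrow> 'k::field) set)"
proof -
  obtain \<sigma> where \<sigma>: "bij_betw \<sigma> (nset n) (nset n)" "y = rl \<sigma> (nset n) x"
    using assms(3) by (auto simp: orbit_def)
  show ?thesis
    unfolding \<sigma>(2) omega_rl[OF \<sigma>(1) assms(1)]
    by (rule diff_push_rl_in_coinv_ker[OF lin_omega[OF assms(2)] \<sigma>(1)])
qed

lemma omega_independent_mod_coinv_ker:
  fixes c :: "'a \<Rightarrow> 'k::field"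
  assumes up: "\<And>x. x \<in> H (nset n) \<Longrightarrow> finite (upset n x)"
    and F: "finite F" "F \<subseteq> H (nset n)"
    and distinct: "\<forall>x\<in>F. \<forall>y\<in>F. x \<noteq> y \<longrightarrow> omega H le n x - omega H le n y \<notin> (coinv_ker H rl n :: ('a \<Rightarrow> 'k) set)"
    and ker: "(\<lambda>y. \<Sum>x\<in>F. c x * omega H le n x y) \<in> coinv_ker H rl n"
  shows "\<forall>x\<in>F. c x = 0"
proof (rule ccontr)
  \<comment> \<open>pairing with the indicator of the orbit of a maximal \<open>x0\<close> isolates \<open>c x0\<close>\<close>
  let ?F' = "{x\<in>F. c x \<noteq> 0}" and ?card = "\<lambda>z. card (upset n z)"
  let ?\<omega> = "\<lambda>x. omega H le n x :: 'a \<Rightarrow> 'k"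
  assume "\<not> (\<forall>x\<in>F. c x = 0)"
  then have "Max (?card ` ?F') \<in> ?card ` ?F'" using F(1) by (intro Max_in) auto
  then obtain x0 where x0: "x0 \<in> ?F'" "?card x0 = Max (?card ` ?F')" by auto
  have max: "?card z \<le> ?card x0" if "z \<in> ?F'" for z using x0(2) F(1) that by simp
  have x0H: "x0 \<in> H (nset n)" using x0(1) F(2) by blast
  let ?\<chi> = "\<lambda>y. if y \<in> orbit n x0 then 1 else 0 :: 'k"
  have "pairing ?\<chi> (\<lambda>y. \<Sum>x\<in>F. c x * ?\<omega> x y) = 0"
    by (rule pairing_coinv_ker_eq_zero[OF ker]) (simp add: rl_mem_orbit_iff[OF x0H])
  moreover have "pairing ?\<chi> (\<lambda>y. \<Sum>x\<in>F. c x * ?\<omega> x y) = (\<Sum>z\<in>F. c z * pairing ?\<chi> (?\<omega> z))"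
  proof (rule pairing_sum_smult[OF F(1)])
    fix x assume "x \<in> F"
    then have "lin (H (nset n)) (?\<omega> x)" using lin_omega up F(2) by blast
    then show "finite (supp (?\<omega> x))" by (simp add: lin_def)
  qed
  ultimately have "(\<Sum>z\<in>F. c z * pairing ?\<chi> (?\<omega> z)) = 0" by simp
  moreover have "c z * pairing ?\<chi> (?\<omega> z) = (if z = x0 then c x0 else 0)" if "z \<in> F" for z
  proof (cases "c z = 0")
    case False
    then have z: "z \<in> ?F'" "z \<in> H (nset n)" using that F(2) by auto
    have "z = x0" if "z \<in> orbit n x0"
    proof (rule ccontr)
      assume "z \<noteq> x0"
      then have "?\<omega> x0 - ?\<omega> z \<notin> coinv_ker H rl n" using distinct x0(1) z(1) by auto
      then show False using omega_orbit_coinv_ker[OF x0H up[OF x0H] that] by contradiction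
    qed
    then have "z \<in> orbit n x0 \<longleftrightarrow> z = x0" using mem_orbit_self[OF x0H] by blast
    moreover have "pairing ?\<chi> (?\<omega> z) = (if z \<in> orbit n x0 then 1 else 0)"
      by (rule pairing_orbit_omega[OF x0H z(2) up[OF z(2)] max[OF z(1)]])
    ultimately show ?thesis by simp
  qed (use x0 in auto)
  ultimately have "c x0 = 0" using F(1) x0(1) by (simp add: sum.delta')
  then show False using x0(1) by simp
qed

end

locale adjoint_species = comonoid_species +
  fixes B :: "nat set \<Rightarrow> nat set \<Rightarrow> 'a \<Rightarrow> 'a \<Rightarrow> 'a"
  assumes B_monoid: "poset_monoid H le rl B" and adjoint: "adjoint_pair H le D B"
begin

lemma B_in: "finite S \<Longrightarrow> finite T \<Longrightarrow> S \<inter> T = {} \<Longrightarrow> y \<in> H S \<Longrightarrow> z \<in> H T \<Longrightarrow> B S T y z \<in> H (S \<union> T)"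
  using B_monoid[unfolded poset_monoid_def, THEN conjunct1] by blast

lemma zeta_transform_push_D:
  assumes fin: "finite S" "finite T" "S \<inter> T = {}" and q: "lin (H (S \<union> T)) q"
    and y: "y \<in> H S" and z: "z \<in> H T"
  shows "zeta_transform (\<lambda>v w. le S (fst v) (fst w) \<and> le T (snd v) (snd w)) (push (D S T) q) (y, z)
    = (zeta_transform (le (S \<union> T)) q (B S T y z) :: 'k::comm_ring_1)"
proof -
  have fq: "finite (supp q)" and sq: "supp q \<subseteq> H (S \<union> T)" using q by (auto simp: lin_def)
  let ?R = "\<lambda>v w. le S (fst v) (fst w) \<and> le T (snd v) (snd w)"
  have adj: "(le S (fst (D S T x)) y \<and> le T (snd (D S T x)) z) \<longleftrightarrow> le (S \<union> T) x (B S T y z)"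
    if "x \<in> supp q" for x
    using adjoint[unfolded adjoint_pair_def, rule_format, of S T x y z] that sq fin y z by auto
  have "zeta_transform ?R (push (D S T) q) (y, z) = pairing (\<lambda>w. if ?R w (y, z) then 1 else 0) (push (D S T) q)"
    by (rule zeta_transform_eq_pairing[OF finite_supp_push[OF fq]])
  also have "\<dots> = pairing ((\<lambda>w. if ?R w (y, z) then 1 else 0) \<circ> D S T) q"
    by (rule pairing_push[OF fq])
  also have "\<dots> = pairing (\<lambda>x. if le (S \<union> T) x (B S T y z) then 1 else 0) q"
    by (rule pairing_cong) (use adj in auto)
  also have "\<dots> = zeta_transform (le (S \<union> T)) q (B S T y z)"
    by (rule zeta_transform_eq_pairing[OF fq, symmetric])
  finally show ?thesis .
qed

lemma lin_primitive_omega: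
  assumes x: "indecomposable H B (nset n) x" and up: "finite (upset n x)"
  shows "lin_primitive D (nset n) (omega H le n x :: 'a \<Rightarrow> 'k::field)"
  unfolding lin_primitive_def
proof (intro allI impI)
  let ?\<omega> = "omega H le n x :: 'a \<Rightarrow> 'k"
  fix S T assume ST: "S \<union> T = nset n \<and> S \<inter> T = {} \<and> S \<noteq> {} \<and> T \<noteq> {}"
  have fin: "finite S" "finite T" using ST by (metis finite_Un finite_nset)+
  have \<omega>: "lin (H (S \<union> T)) ?\<omega>" using lin_omega[OF up] ST by simp
  interpret P: poset_on "H S \<times> H T" "\<lambda>v w. le S (fst v) (fst w) \<and> le T (snd v) (snd w)"
    using poset_on_prod poset_on_H fin by blast
  interpret L: locally_finite_poset "H (nset n)" "le (nset n)" by (rule locally_finite_poset_H) simp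
  show "push (D S T) ?\<omega> = 0"
  proof (rule P.zeta_transform_eq_zero_imp_eq_zero)
    show "finite (supp (push (D S T) ?\<omega>))" using \<omega> finite_supp_push by (auto simp: lin_def)
    show "supp (push (D S T) ?\<omega>) \<subseteq> H S \<times> H T" using \<omega> fin ST by (intro supp_push_D) auto
    fix w assume "w \<in> H S \<times> H T"
    then obtain y z where w: "w = (y, z)" "y \<in> H S" "z \<in> H T" by auto
    have "B S T y z \<in> H (nset n)" using B_in[OF fin _ w(2,3)] ST by auto
    moreover have "x \<in> H (nset n)" "x \<noteq> B S T y z" using x ST w unfolding indecomposable_def by auto
    ultimately have "zeta_transform (le (nset n)) ?\<omega> (B S T y z) = 0"
      by (simp add: omega_eq_mobius L.zeta_transform_mobius)
    then show "zeta_transform (\<lambda>v w. le S (fst v) (fst w) \<and> le T (snd v) (snd w)) (push (D S T) ?\<omega>) w = 0"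
      using zeta_transform_push_D[OF fin _ \<omega> w(2,3)] ST w(1) by simp
  qed
qed

lemma zeta_transform_decomposable:
  assumes p: "lin (H (nset n)) p" "lin_primitive D (nset n) p"
    and ST: "S \<union> T = nset n" "S \<inter> T = {}" "S \<noteq> {}" "T \<noteq> {}" and y: "y \<in> H S" and z: "z \<in> H T"
  shows "zeta_transform (le (nset n)) p (B S T y z) = (0 :: 'k::field)"
proof -
  have fin: "finite S" "finite T" using ST by (metis finite_Un finite_nset)+
  have "push (D S T) p = 0" using p(2) ST unfolding lin_primitive_def by blast
  then show ?thesis
    using zeta_transform_push_D[OF fin ST(2) _ y z, of p] p(1) ST(1) by (simp add: zeta_transform_def)
qed

lemma lin_primitive_omega_expansion:
  fixes p :: "'a \<Rightarrow> 'k::field"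
  assumes p: "lin (H (nset n)) p" "lin_primitive D (nset n) p"
    and up: "\<And>x. x \<in> H (nset n) \<Longrightarrow> finite (upset n x)"
  obtains F c where "finite F" "\<forall>x\<in>F. indecomposable H B (nset n) x"
    "p = (\<lambda>y. \<Sum>x\<in>F. c x * omega H le n x y)"
proof -
  interpret L: locally_finite_poset "H (nset n)" "le (nset n)" by (rule locally_finite_poset_H) simp
  define U where "U = {x \<in> H (nset n). \<exists>w\<in>supp p. le (nset n) w x}"
  define F where "F = {x \<in> U. indecomposable H B (nset n) x}"
  have fin: "finite (supp p)" and sub: "supp p \<subseteq> H (nset n)" using p(1) by (auto simp: lin_def)
  have U: "finite U" "p = (\<lambda>y. \<Sum>x\<in>U. zeta_transform (le (nset n)) p x * mobius (H (nset n)) (le (nset n)) x y)"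
    using L.mobius_inversion[OF fin sub] up unfolding U_def upset_def by blast+
  have "zeta_transform (le (nset n)) p x = 0" if "x \<in> U - F" for x
  proof -
    have "x \<in> H (nset n)" "\<not> indecomposable H B (nset n) x" using that by (auto simp: U_def F_def)
    then obtain S T y z where "S \<noteq> {}" "T \<noteq> {}" "S \<inter> T = {}" "S \<union> T = nset n"
      "y \<in> H S" "z \<in> H T" "x = B S T y z"
      unfolding indecomposable_def by blast
    then show ?thesis using zeta_transform_decomposable[OF p] by simp
  qed
  then have "(\<lambda>y. \<Sum>x\<in>U. zeta_transform (le (nset n)) p x * mobius (H (nset n)) (le (nset n)) x y) =
      (\<lambda>y. \<Sum>x\<in>F. zeta_transform (le (nset n)) p x * mobius (H (nset n)) (le (nset n)) x y)"
    by (intro ext sum.mono_neutral_right[OF U(1)]) (auto simp: F_def)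
  then have "p = (\<lambda>y. \<Sum>x\<in>F. zeta_transform (le (nset n)) p x * omega H le n x y)"
    using U(2) by (simp add: omega_eq_mobius)
  moreover have "finite F" "\<forall>x\<in>F. indecomposable H B (nset n) x" using U(1) by (auto simp: F_def)
  ultimately show thesis using that by blast
qed

lemma fock_primitive_omega:
  assumes "indecomposable H B (nset n) x" "finite (upset n x)"
  shows "fock_primitive H rl D n (omega H le n x :: 'a \<Rightarrow> 'k::field_char_0)"
proof -
  have "omega H le n x - omega H le n x \<in> (coinv_ker H rl n :: ('a \<Rightarrow> 'k) set)"
    by (simp add: coinv_ker_def lspan.zero)
  then show ?thesis
    using fock_primitive_iff lin_omega[OF assms(2)] lin_primitive_omega[OF assms] by blast
qed

lemma fock_primitive_omega_expansion:
  fixes v :: "'a \<Rightarrow> 'k::field_char_0"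
  assumes "lin (H (nset n)) v" "fock_primitive H rl D n v"
    and "\<And>x. x \<in> H (nset n) \<Longrightarrow> finite (upset n x)"
  shows "\<exists>F c. finite F \<and> (\<forall>x\<in>F. indecomposable H B (nset n) x) \<and>
    v - (\<lambda>y. \<Sum>x\<in>F. c x * omega H le n x y) \<in> coinv_ker H rl n"
proof -
  obtain p where "lin (H (nset n)) p" "lin_primitive D (nset n) p" "v - p \<in> coinv_ker H rl n"
    using fock_primitive_iff assms(1,2) by blast
  moreover from this obtain F c where "finite F" "\<forall>x\<in>F. indecomposable H B (nset n) x"
    "p = (\<lambda>y. \<Sum>x\<in>F. c x * omega H le n x y)"
    using lin_primitive_omega_expansion assms(3) by metis
  ultimately show ?thesis by blast
qed

lemma omega_basis_primitives:
  assumes up: "\<forall>x\<in>H (nset n). finite {y \<in> H (nset n). le (nset n) x y}"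
  shows "(\<forall>x. indecomposable H B (nset n) x \<longrightarrow>
           fock_primitive H rl D n (omega H le n x :: 'a \<Rightarrow> 'k::field_char_0)) \<and>
      (\<forall>v :: 'a \<Rightarrow> 'k. lin (H (nset n)) v \<and> fock_primitive H rl D n v \<longrightarrow>
           (\<exists>F c. finite F \<and> (\<forall>x\<in>F. indecomposable H B (nset n) x) \<and>
              v - (\<lambda>y. \<Sum>x\<in>F. c x * omega H le n x y) \<in> coinv_ker H rl n)) \<and>
      (\<forall>F (c :: 'a \<Rightarrow> 'k). finite F \<and> (\<forall>x\<in>F. indecomposable H B (nset n) x) \<and>
           (\<forall>x\<in>F. \<forall>y\<in>F. x \<noteq> y \<longrightarrow> omega H le n x - omega H le n y \<notin> (coinv_ker H rl n :: ('a \<Rightarrow> 'k) set)) \<and>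
           (\<lambda>y. \<Sum>x\<in>F. c x * omega H le n x y) \<in> coinv_ker H rl n \<longrightarrow>
           (\<forall>x\<in>F. c x = 0))"
proof (intro allI impI conjI)
  have up: "\<And>x. x \<in> H (nset n) \<Longrightarrow> finite (upset n x)" using up by (simp add: upset_def)
  show "fock_primitive H rl D n (omega H le n x :: 'a \<Rightarrow> 'k)" if "indecomposable H B (nset n) x" for x
    using fock_primitive_omega[OF that up] that by (simp add: indecomposable_def)
  show "\<exists>F c. finite F \<and> (\<forall>x\<in>F. indecomposable H B (nset n) x) \<and>
      v - (\<lambda>y. \<Sum>x\<in>F. c x * omega H le n x y) \<in> coinv_ker H rl n"
    if "lin (H (nset n)) v \<and> fock_primitive H rl D n v" for v :: "'a \<Rightarrow> 'k"
    using fock_primitive_omega_expansion up that by blast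
  show "\<forall>x\<in>F. c x = 0"
    if "finite F \<and> (\<forall>x\<in>F. indecomposable H B (nset n) x) \<and>
      (\<forall>x\<in>F. \<forall>y\<in>F. x \<noteq> y \<longrightarrow> omega H le n x - omega H le n y \<notin> (coinv_ker H rl n :: ('a \<Rightarrow> 'k) set)) \<and>
      (\<lambda>y. \<Sum>x\<in>F. c x * omega H le n x y) \<in> coinv_ker H rl n" for F and c :: "'a \<Rightarrow> 'k"
    using omega_independent_mod_coinv_ker[OF up] that by (auto simp: indecomposable_def)
qed

end

theorem mainTheorem7:
  fixes H :: "nat set \<Rightarrow> 'a set"
    and le :: "nat set \<Rightarrow> 'a \<Rightarrow> 'a \<Rightarrow> bool"
    and rl :: "(nat \<Rightarrow> nat) \<Rightarrow> nat set \<Rightarrow> 'a \<Rightarrow> 'a"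
    and m :: "nat set \<Rightarrow> nat set \<Rightarrow> 'a \<Rightarrow> 'a \<Rightarrow> 'a"
    and D :: "nat set \<Rightarrow> nat set \<Rightarrow> 'a \<Rightarrow> 'a \<times> 'a"
  assumes hopf: "poset_hopf_monoid H le rl m D"
  shows "(\<forall>n \<ge> 1. \<forall>v :: 'a \<Rightarrow> 'k::field_char_0. lin (H (nset n)) v \<longrightarrow>
            (fock_primitive H rl D n v \<longleftrightarrow>
             (\<exists>p. lin (H (nset n)) p \<and> lin_primitive D (nset n) p \<and> v - p \<in> coinv_ker H rl n)))
       \<and> (\<forall>B. poset_monoid H le rl B \<and> adjoint_pair H le D B \<and>
              (\<forall>n. \<forall>x\<in>H (nset n). finite {y \<in> H (nset n). le (nset n) x y}) \<longrightarrow>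
            (\<forall>n \<ge> 1.
              (\<forall>x. indecomposable H B (nset n) x \<longrightarrow>
                   fock_primitive H rl D n (omega H le n x :: 'a \<Rightarrow> 'k)) \<and>
              (\<forall>v :: 'a \<Rightarrow> 'k. lin (H (nset n)) v \<and> fock_primitive H rl D n v \<longrightarrow>
                   (\<exists>F c. finite F \<and> (\<forall>x\<in>F. indecomposable H B (nset n) x) \<and>
                      v - (\<lambda>y. \<Sum>x\<in>F. c x * omega H le n x y) \<in> coinv_ker H rl n)) \<and>
              (\<forall>F (c :: 'a \<Rightarrow> 'k). finite F \<and> (\<forall>x\<in>F. indecomposable H B (nset n) x) \<and>
                   (\<forall>x\<in>F. \<forall>y\<in>F. x \<noteq> y \<longrightarrow> omega H le n x - omega H le n y \<notin> (coinv_ker H rl n :: ('a \<Rightarrow> 'k) set)) \<and>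
                   (\<lambda>y. \<Sum>x\<in>F. c x * omega H le n x y) \<in> coinv_ker H rl n \<longrightarrow>
                   (\<forall>x\<in>F. c x = 0))))"
proof -
  interpret comonoid_species H le rl D
    using hopf unfolding poset_hopf_monoid_def by unfold_locales blast+
  have adjoint: "adjoint_species H le rl D B" if "poset_monoid H le rl B" "adjoint_pair H le D B" for B
    using that by unfold_locales
  show ?thesis (is "?part1 \<and> ?part2")
  proof
    show ?part1 using fock_primitive_iff by blast
    show ?part2
      using adjoint by (intro allI impI, rule adjoint_species.omega_basis_primitives) blast+
  qed
qed

end
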